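(* Let $\Omega_{\mathrm{DS}}^{\mathrm{(S1)}}$ be the class of all sequences $\{\Gamma_n^{\mathrm{Sp}}(A)\}_{n\in\mathbb{N}}$ of subsets of $\mathbb{R}$ such that $A\in\Omega_{\mathrm{DS}}$ and $d_{\mathrm{H}}(\Gamma_n^{\mathrm{Sp}}(A),\mathrm{Sp}(A))\le 2^{-n}$ for all $n\in\mathbb{N}$, and let $\Lambda_{\mathrm{(S1)}}$ be the evaluation set allowing an algorithm to read the individual terms $\Gamma_n^{\mathrm{Sp}}(A)$ of the input sequence. Let $\Xi_{\mathrm{Lm}}$ assign to such an input the Lebesgue measure $|\mathrm{Sp}(A)|$. Then $\{\Xi_{\mathrm{Lm}},\Omega_{\mathrm{DS}}^{\mathrm{(S1)}},\mathbb{R}_{\ge0},\Lambda_{\mathrm{(S1)}}\}\notin\Delta_1^G$.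
   Context: $\Omega_{\mathrm{DS}}$ is the class of discrete Schrödinger operators on $\ell^2(\mathbb{Z})$, $[A\psi](n)=\psi(n-1)+\psi(n+1)+V(n)\psi(n)$ with $V:\mathbb{Z}\to\mathbb{R}$ bounded. $\mathrm{Sp}(A)$ is the spectrum and $d_{\mathrm{H}}$ the Hausdorff distance between subsets of $\mathbb{R}$. SCI framework: a computational problem $\{\Xi,\Omega,\mathcal{M},\Lambda\}$ consists of inputs $\Omega$, a metric space $(\mathcal{M},d)$, a map $\Xi:\Omega\to\mathcal{M}$ and a set $\Lambda$ of functions on $\Omega$ (readable information). A general algorithm is a map $\Gamma:\Omega\to\mathcal{M}$ such that for each input $A$ there is a finite set $\Lambda_\Gamma(A)\subset\Lambda$ with: if $B\in\Omega$ and $f(B)=f(A)$ for all $f\in\Lambda_\Gamma(A)$, then $\Lambda_\Gamma(B)=\Lambda_\Gamma(A)$ and $\Gamma(B)=\Gamma(A)$. The problem is in $\Delta_1^G$ if there exist general algorithms $\Gamma_n$ with $d(\Gamma_n(A),\Xi(A))\le 2^{-n}$ for all $A\in\Omega$ and $n\in\mathbb{N}$. *)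

theory Defs
  imports "HOL-Analysis.Analysis"
begin

definition l2 :: "(int \<Rightarrow> complex) set" where
  "l2 = {\<psi>. (\<lambda>n. (cmod (\<psi> n))\<^sup>2) summable_on UNIV}"

definition l2norm :: "(int \<Rightarrow> complex) \<Rightarrow> real" where
  "l2norm \<psi> = sqrt (infsum (\<lambda>n. (cmod (\<psi> n))\<^sup>2) UNIV)"

definition schrod :: "(int \<Rightarrow> real) \<Rightarrow> (int \<Rightarrow> complex) \<Rightarrow> (int \<Rightarrow> complex)" where
  "schrod V \<psi> = (\<lambda>n. \<psi> (n - 1) + \<psi> (n + 1) + complex_of_real (V n) * \<psi> n)"

definition l2_invertible :: "((int \<Rightarrow> complex) \<Rightarrow> (int \<Rightarrow> complex)) \<Rightarrow> bool" where
  "l2_invertible T \<longleftrightarrow>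
     (\<exists>B. (\<forall>\<psi>\<in>l2. B \<psi> \<in> l2) \<and>
          (\<exists>C. \<forall>\<psi>\<in>l2. l2norm (B \<psi>) \<le> C * l2norm \<psi>) \<and>
          (\<forall>\<psi>\<in>l2. B (T \<psi>) = \<psi> \<and> T (B \<psi>) = \<psi>))"

definition Sp :: "(int \<Rightarrow> real) \<Rightarrow> real set" where
  "Sp V = {z::real. \<not> l2_invertible (\<lambda>\<psi> n. schrod V \<psi> n - complex_of_real z * \<psi> n)}"

definition dH :: "real set \<Rightarrow> real set \<Rightarrow> ennreal" where
  "dH S T = max (SUP x\<in>S. INF y\<in>T. ennreal (dist x y)) (SUP y\<in>T. INF x\<in>S. ennreal (dist x y))"

definition general_algorithm :: "'a set \<Rightarrow> ('a \<Rightarrow> 'b) set \<Rightarrow> ('a \<Rightarrow> 'm) \<Rightarrow> bool" where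
  "general_algorithm \<Omega> \<Lambda> \<Gamma> \<longleftrightarrow>
     (\<exists>L :: 'a \<Rightarrow> ('a \<Rightarrow> 'b) set. \<forall>A\<in>\<Omega>. finite (L A) \<and> L A \<subseteq> \<Lambda> \<and>
        (\<forall>B\<in>\<Omega>. (\<forall>f\<in>L A. f B = f A) \<longrightarrow> L B = L A \<and> \<Gamma> B = \<Gamma> A))"

definition Delta1G :: "('a \<Rightarrow> 'm) \<Rightarrow> 'a set \<Rightarrow> 'm set \<Rightarrow> ('m \<Rightarrow> 'm \<Rightarrow> real)
                         \<Rightarrow> ('a \<Rightarrow> 'b) set \<Rightarrow> bool" where
  "Delta1G \<Xi> \<Omega> M d \<Lambda> \<longleftrightarrow>
     (\<exists>\<Gamma> :: nat \<Rightarrow> 'a \<Rightarrow> 'm. \<forall>n. general_algorithm \<Omega> \<Lambda> (\<Gamma> n) \<and>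
        (\<forall>A\<in>\<Omega>. \<Gamma> n A \<in> M \<and> d (\<Gamma> n A) (\<Xi> A) \<le> (1/2) ^ n))"

text \<open>Input sequences are indexed by k :: nat, where term k stands for
  Gamma_n with n = k + 1 (so N = {1,2,...}).\<close>

definition Omega_S1 :: "(nat \<Rightarrow> real set) set" where
  "Omega_S1 = {S. \<exists>V :: int \<Rightarrow> real. bounded (range V) \<and>
                 (\<forall>k. dH (S k) (Sp V) \<le> ennreal ((1/2) ^ Suc k))}"

definition Lambda_S1 :: "((nat \<Rightarrow> real set) \<Rightarrow> real set) set" where
  "Lambda_S1 = range (\<lambda>k S. S k)"

definition Xi_Lm :: "(nat \<Rightarrow> real set) \<Rightarrow> real" where
  "Xi_Lm S = measure lebesgue (Sp (SOME V. bounded (range V) \<and>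
                 (\<forall>k. dH (S k) (Sp V) \<le> ennreal ((1/2) ^ Suc k))))"

end

theory Submission
  imports Defs
begin

text \<open>An algorithm reads only finitely many terms of its input, so it cannot distinguish the
  constant sequence \<open>Sp(A\<^sub>V)\<close>, for the step potential \<open>V = 2\<close> on \<open>n < 0\<close> and \<open>V = 4\<close> on
  \<open>n \<ge> 0\<close> with \<open>Sp(A\<^sub>V) = [0, 6]\<close>, from a sequence that agrees with it up to an index \<open>N\<close>
  and is \<open>Sp(A\<^sub>W)\<close> afterwards, as long as \<open>d\<^sub>H(Sp(A\<^sub>V), Sp(A\<^sub>W)) \<le> 2\<^sup>-\<^sup>N\<close>. Such a \<open>W\<close>
  with \<open>|Sp(A\<^sub>W)| \<le> 5\<close> exists: \<open>W = 4\<close> except for \<open>J + 1 \<approx> 2\<^sup>N\<^sup>+\<^sup>2\<close> far apart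
  single-site wells. Its spectrum is the band \<open>[2, 6]\<close>, coming from the half-line where
  \<open>W = 4\<close>, together with one point near each level \<open>E\<^sub>j = j 2\<^sup>-\<^sup>N\<^sup>-\<^sup>1\<close> of the wells; the
  levels fill \<open>[0, 2]\<close> up to \<open>2\<^sup>-\<^sup>N\<close>, and away from them the resolvent is given by a Krein
  formula. Both inputs get the same output, which cannot be within \<open>1/4\<close> of both
  measures, \<open>6\<close> and \<open>\<le> 5\<close>.\<close>

section \<open>Square-summable sequences\<close>

text \<open>\<open>l2_bdd \<psi> M\<close> says \<open>\<psi> \<in> l2\<close> and \<open>l2norm \<psi> \<le> M\<close> (lemmas \<open>l2_bdd_imp_l2\<close>, \<open>l2_bdd_l2norm\<close>), but
  only through finite partial sums, so that it is preserved by sums, shifts, domination and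
  pointwise limits without any summability bookkeeping.\<close>

definition l2_bdd :: "(int \<Rightarrow> complex) \<Rightarrow> real \<Rightarrow> bool" where
  "l2_bdd \<psi> M \<longleftrightarrow> (\<forall>F. finite F \<longrightarrow> L2_set (\<lambda>n. cmod (\<psi> n)) F \<le> M)"

lemma l2_bdd_nonneg: "l2_bdd \<psi> M \<Longrightarrow> 0 \<le> M"
  unfolding l2_bdd_def by (metis L2_set_empty finite.emptyI)

lemma l2_bdd_sum_squares:
  assumes "l2_bdd \<psi> M" "finite F"
  shows "(\<Sum>n\<in>F. (cmod (\<psi> n))\<^sup>2) \<le> M\<^sup>2"
proof -
  have "L2_set (\<lambda>n. cmod (\<psi> n)) F \<le> M" using assms unfolding l2_bdd_def by auto
  hence "(L2_set (\<lambda>n. cmod (\<psi> n)) F)\<^sup>2 \<le> M\<^sup>2" by (intro power_mono) auto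
  thus ?thesis using assms(2) unfolding L2_set_def by (simp add: sum_nonneg)
qed

lemma l2_bdd_imp_l2:
  assumes "l2_bdd \<psi> M"
  shows "\<psi> \<in> l2" "l2norm \<psi> \<le> M"
proof -
  have sm: "(\<lambda>n. (cmod (\<psi> n))\<^sup>2) summable_on UNIV"
    by (rule nonneg_bdd_above_summable_on)
      (auto intro!: bdd_aboveI[where M="M\<^sup>2"] l2_bdd_sum_squares[OF assms])
  thus "\<psi> \<in> l2" unfolding l2_def by simp
  have "infsum (\<lambda>n. (cmod (\<psi> n))\<^sup>2) UNIV \<le> M\<^sup>2"
    by (rule infsum_le_finite_sums[OF sm]) (rule l2_bdd_sum_squares[OF assms])
  hence "l2norm \<psi> \<le> sqrt (M\<^sup>2)" unfolding l2norm_def by (rule real_sqrt_le_mono)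
  thus "l2norm \<psi> \<le> M" using l2_bdd_nonneg[OF assms] by simp
qed

lemma l2norm_nonneg: "0 \<le> l2norm \<psi>"
  unfolding l2norm_def by (simp add: infsum_nonneg)

lemma L2_set_le_l2norm:
  assumes "\<psi> \<in> l2" "finite F"
  shows "L2_set (\<lambda>n. cmod (\<psi> n)) F \<le> l2norm \<psi>"
proof -
  have sm: "(\<lambda>n. (cmod (\<psi> n))\<^sup>2) summable_on UNIV" using assms(1) unfolding l2_def by simp
  have "(\<Sum>n\<in>F. (cmod (\<psi> n))\<^sup>2) \<le> infsum (\<lambda>n. (cmod (\<psi> n))\<^sup>2) UNIV"
    by (rule finite_sum_le_infsum[OF sm assms(2)]) auto
  thus ?thesis unfolding L2_set_def l2norm_def by (simp add: real_sqrt_le_mono)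
qed

lemma l2_bdd_l2norm: "\<psi> \<in> l2 \<Longrightarrow> l2_bdd \<psi> (l2norm \<psi>)"
  unfolding l2_bdd_def using L2_set_le_l2norm by blast

lemma l2_bdd_mono: "l2_bdd \<psi> M \<Longrightarrow> M \<le> M' \<Longrightarrow> l2_bdd \<psi> M'"
  unfolding l2_bdd_def by (meson order_trans)

lemma l2_bdd_pointwise:
  assumes "l2_bdd \<psi> M"
  shows "cmod (\<psi> n) \<le> M"
proof -
  have "L2_set (\<lambda>n. cmod (\<psi> n)) {n} \<le> M" using assms unfolding l2_bdd_def by blast
  thus ?thesis by simp
qed

lemma l2_bdd_zero: "l2_bdd (\<lambda>n. 0) 0"
  unfolding l2_bdd_def by (simp add: L2_set_0')

lemma l2_bdd_add:
  assumes "l2_bdd \<psi> a" "l2_bdd \<phi> b"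
  shows "l2_bdd (\<lambda>n. \<psi> n + \<phi> n) (a + b)"
  unfolding l2_bdd_def
proof (intro allI impI)
  fix F :: "int set" assume F: "finite F"
  have "L2_set (\<lambda>n. cmod (\<psi> n + \<phi> n)) F \<le> L2_set (\<lambda>n. cmod (\<psi> n) + cmod (\<phi> n)) F"
    by (rule L2_set_mono) (auto simp: norm_triangle_ineq)
  also have "\<dots> \<le> L2_set (\<lambda>n. cmod (\<psi> n)) F + L2_set (\<lambda>n. cmod (\<phi> n)) F"
    by (rule L2_set_triangle_ineq)
  also have "\<dots> \<le> a + b" using assms F unfolding l2_bdd_def by (meson add_mono)
  finally show "L2_set (\<lambda>n. cmod (\<psi> n + \<phi> n)) F \<le> a + b" .
qed

lemma l2_bdd_dominated:
  assumes "l2_bdd \<psi> M" "0 \<le> c" "\<And>n. cmod (\<phi> n) \<le> c * cmod (\<psi> n)"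
  shows "l2_bdd \<phi> (c * M)"
  unfolding l2_bdd_def
proof (intro allI impI)
  fix F :: "int set" assume F: "finite F"
  have "L2_set (\<lambda>n. cmod (\<phi> n)) F \<le> L2_set (\<lambda>n. c * cmod (\<psi> n)) F"
    by (rule L2_set_mono) (auto simp: assms)
  also have "\<dots> = c * L2_set (\<lambda>n. cmod (\<psi> n)) F"
    using L2_set_right_distrib[OF assms(2), of "\<lambda>n. cmod (\<psi> n)" F] by simp
  also have "\<dots> \<le> c * M" using assms F unfolding l2_bdd_def by (simp add: mult_left_mono)
  finally show "L2_set (\<lambda>n. cmod (\<phi> n)) F \<le> c * M" .
qed

lemma l2_bdd_scale: "l2_bdd \<psi> M \<Longrightarrow> l2_bdd (\<lambda>n. a * \<psi> n) (cmod a * M)"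
  by (erule l2_bdd_dominated) (auto simp: norm_mult)

lemma l2_bdd_sum:
  assumes "finite S" "\<And>k. k \<in> S \<Longrightarrow> l2_bdd (\<psi> k) (M k)"
  shows "l2_bdd (\<lambda>n. \<Sum>k\<in>S. \<psi> k n) (\<Sum>k\<in>S. M k)"
  using assms by (induction S rule: finite_induct) (auto simp: l2_bdd_zero l2_bdd_add)

lemma l2_bdd_shift:
  assumes "l2_bdd \<psi> M"
  shows "l2_bdd (\<lambda>n. \<psi> (n + k)) M"
  unfolding l2_bdd_def
proof (intro allI impI)
  fix F :: "int set" assume F: "finite F"
  have "L2_set (\<lambda>n. cmod (\<psi> (n + k))) F = L2_set (\<lambda>n. cmod (\<psi> n)) ((\<lambda>n. n + k) ` F)"
    unfolding L2_set_def by (subst sum.reindex) (auto simp: inj_on_def)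
  also have "\<dots> \<le> M" using assms F unfolding l2_bdd_def by auto
  finally show "L2_set (\<lambda>n. cmod (\<psi> (n + k))) F \<le> M" .
qed

lemma l2_bdd_neighbours:
  assumes "l2_bdd \<psi> M"
  shows "l2_bdd (\<lambda>n. \<psi> (n - 1) + \<psi> (n + 1)) (2 * M)"
  using l2_bdd_add[OF l2_bdd_shift[OF assms, of "-1"] l2_bdd_shift[OF assms, of 1]] by simp

lemma l2_bdd_finite_support:
  assumes "finite S" "\<And>n. n \<notin> S \<Longrightarrow> \<psi> n = 0" "\<And>n. cmod (\<psi> n) \<le> B"
  shows "l2_bdd \<psi> (sqrt (card S) * B)"
  unfolding l2_bdd_def
proof (intro allI impI)
  fix F :: "int set" assume F: "finite F"
  have "L2_set (\<lambda>n. cmod (\<psi> n)) F \<le> L2_set (\<lambda>n. cmod (\<psi> n)) (F \<union> S)"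
    unfolding L2_set_def using F assms(1) by (intro real_sqrt_le_mono sum_mono2) auto
  also have "\<dots> = L2_set (\<lambda>n. cmod (\<psi> n)) S"
    unfolding L2_set_def using F assms(1,2)
    by (intro arg_cong[where f=sqrt] sum.mono_neutral_right) auto
  also have "\<dots> \<le> L2_set (\<lambda>n. B) S" by (rule L2_set_mono) (auto simp: assms)
  also have "\<dots> = sqrt (card S) * B"
    using L2_set_constant[of B S] assms(3)[of 0] norm_ge_zero[of "\<psi> 0"] by simp
  finally show "L2_set (\<lambda>n. cmod (\<psi> n)) F \<le> sqrt (card S) * B" .
qed

lemma l2norm_eq_0_iff:
  assumes "\<psi> \<in> l2"
  shows "l2norm \<psi> = 0 \<longleftrightarrow> \<psi> = (\<lambda>n. 0)"
proof
  assume "l2norm \<psi> = 0"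
  hence "l2_bdd \<psi> 0" using l2_bdd_l2norm[OF assms] by simp
  thus "\<psi> = (\<lambda>n. 0)" using l2_bdd_pointwise by fastforce
qed (simp add: l2norm_def)

lemma l2norm_pos: "\<psi> \<in> l2 \<Longrightarrow> \<psi> \<noteq> (\<lambda>n. 0) \<Longrightarrow> 0 < l2norm \<psi>"
  using l2norm_eq_0_iff l2norm_nonneg by (metis less_eq_real_def)

lemma l2norm_le_contraction_imp_zero:
  assumes "\<psi> \<in> l2" "l2norm \<psi> \<le> a * l2norm \<psi>" "a < 1"
  shows "\<psi> = (\<lambda>n. 0)"
proof -
  have "(1 - a) * l2norm \<psi> \<le> 0" using assms(2) by (simp add: algebra_simps)
  hence "l2norm \<psi> \<le> 0" using assms(3) by (simp add: mult_le_0_iff)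
  thus ?thesis using l2norm_eq_0_iff[OF assms(1)] l2norm_nonneg[of \<psi>] by simp
qed

lemma l2norm_scale_le: "\<psi> \<in> l2 \<Longrightarrow> l2norm (\<lambda>n. c * \<psi> n) \<le> cmod c * l2norm \<psi>"
  using l2_bdd_imp_l2(2)[OF l2_bdd_scale[OF l2_bdd_l2norm]] .

lemma l2_zero: "(\<lambda>n. 0) \<in> l2"
  using l2_bdd_imp_l2[OF l2_bdd_zero] by blast

lemma l2_add: "a \<in> l2 \<Longrightarrow> b \<in> l2 \<Longrightarrow> (\<lambda>n. a n + b n) \<in> l2"
  using l2_bdd_add[OF l2_bdd_l2norm l2_bdd_l2norm] l2_bdd_imp_l2 by blast

lemma l2_scale: "a \<in> l2 \<Longrightarrow> (\<lambda>n. c * a n) \<in> l2"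
  using l2_bdd_scale[OF l2_bdd_l2norm] l2_bdd_imp_l2 by blast

lemma l2_lin_comb: "a \<in> l2 \<Longrightarrow> b \<in> l2 \<Longrightarrow> (\<lambda>n. a n + c * b n) \<in> l2"
  using l2_add l2_scale by blast

lemma l2_diff: "a \<in> l2 \<Longrightarrow> b \<in> l2 \<Longrightarrow> (\<lambda>n. a n - b n) \<in> l2"
  using l2_lin_comb[of a b "-1"] by simp

lemma l2_shift: "a \<in> l2 \<Longrightarrow> (\<lambda>n. a (n + k)) \<in> l2"
  using l2_bdd_shift[OF l2_bdd_l2norm] l2_bdd_imp_l2 by blast

section \<open>Operators on \<open>l2\<close>\<close>

definition linear_on_l2 :: "((int \<Rightarrow> complex) \<Rightarrow> (int \<Rightarrow> complex)) \<Rightarrow> bool" where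
  "linear_on_l2 T \<longleftrightarrow>
     (\<forall>a\<in>l2. \<forall>b\<in>l2. \<forall>c. T (\<lambda>n. a n + c * b n) = (\<lambda>n. T a n + c * T b n))"

lemma linear_on_l2_diff:
  assumes "linear_on_l2 T" "a \<in> l2" "b \<in> l2"
  shows "T (\<lambda>n. a n - b n) = (\<lambda>n. T a n - T b n)"
  using assms unfolding linear_on_l2_def by (metis (no_types, lifting) ext mult_minus1 diff_conv_add_uminus)

lemma linear_on_l2_zero: "linear_on_l2 T \<Longrightarrow> T (\<lambda>n. 0) = (\<lambda>n. 0)"
  using linear_on_l2_diff[OF _ l2_zero l2_zero] by (metis (no_types) diff_self)

lemma linear_on_l2_add:
  assumes "linear_on_l2 T" "a \<in> l2" "b \<in> l2"
  shows "T (\<lambda>n. a n + b n) = (\<lambda>n. T a n + T b n)"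
  using assms unfolding linear_on_l2_def by (metis (no_types, lifting) ext mult_1)

lemma linear_on_l2_scale:
  assumes "linear_on_l2 T" "a \<in> l2"
  shows "T (\<lambda>n. c * a n) = (\<lambda>n. c * T a n)"
  using assms(1)[unfolded linear_on_l2_def, rule_format, OF l2_zero assms(2)]
    linear_on_l2_zero[OF assms(1)] by simp

lemma l2_invertibleI:
  assumes lin: "linear_on_l2 T"
    and maps: "\<And>\<psi>. \<psi> \<in> l2 \<Longrightarrow> T \<psi> \<in> l2"
    and inj: "\<And>u. u \<in> l2 \<Longrightarrow> T u = (\<lambda>n. 0) \<Longrightarrow> u = (\<lambda>n. 0)"
    and solvable: "\<And>\<phi>. \<phi> \<in> l2 \<Longrightarrow> \<exists>\<psi>\<in>l2. T \<psi> = \<phi> \<and> l2norm \<psi> \<le> C * l2norm \<phi>"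
  shows "l2_invertible T"
proof -
  define B where "B \<phi> = (SOME \<psi>. \<psi> \<in> l2 \<and> T \<psi> = \<phi> \<and> l2norm \<psi> \<le> C * l2norm \<phi>)" for \<phi>
  have B: "B \<phi> \<in> l2 \<and> T (B \<phi>) = \<phi> \<and> l2norm (B \<phi>) \<le> C * l2norm \<phi>" if "\<phi> \<in> l2" for \<phi>
    unfolding B_def using solvable[OF that]
    by (rule someI_ex[where P="\<lambda>\<psi>. \<psi> \<in> l2 \<and> T \<psi> = \<phi> \<and> l2norm \<psi> \<le> C * l2norm \<phi>", OF bexE]) blast
  have B_left: "B (T \<psi>) = \<psi>" if \<psi>: "\<psi> \<in> l2" for \<psi>
  proof -
    have "T (\<lambda>n. B (T \<psi>) n - \<psi> n) = (\<lambda>n. 0)"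
      using linear_on_l2_diff[OF lin _ \<psi>] B maps[OF \<psi>] by simp
    hence "(\<lambda>n. B (T \<psi>) n - \<psi> n) = (\<lambda>n. 0)" using inj l2_diff B maps \<psi> by blast
    thus ?thesis by (metis (no_types) eq_iff_diff_eq_0 ext)
  qed
  show ?thesis unfolding l2_invertible_def using B B_left by blast
qed

lemma l2_invertibleE:
  assumes "l2_invertible T"
  obtains B C where "C > 0" "\<And>\<psi>. \<psi> \<in> l2 \<Longrightarrow> B \<psi> \<in> l2"
    "\<And>\<psi>. \<psi> \<in> l2 \<Longrightarrow> l2norm (B \<psi>) \<le> C * l2norm \<psi>"
    "\<And>\<psi>. \<psi> \<in> l2 \<Longrightarrow> B (T \<psi>) = \<psi>" "\<And>\<psi>. \<psi> \<in> l2 \<Longrightarrow> T (B \<psi>) = \<psi>"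
proof -
  obtain B C where B: "\<forall>\<psi>\<in>l2. B \<psi> \<in> l2" "\<forall>\<psi>\<in>l2. l2norm (B \<psi>) \<le> C * l2norm \<psi>"
    "\<forall>\<psi>\<in>l2. B (T \<psi>) = \<psi> \<and> T (B \<psi>) = \<psi>"
    using assms unfolding l2_invertible_def by blast
  have "l2norm (B \<psi>) \<le> (\<bar>C\<bar> + 1) * l2norm \<psi>" if "\<psi> \<in> l2" for \<psi>
  proof -
    have "C * l2norm \<psi> \<le> (\<bar>C\<bar> + 1) * l2norm \<psi>" using l2norm_nonneg[of \<psi>] by (intro mult_right_mono) auto
    thus ?thesis using B(2) that by force
  qed
  thus ?thesis using that[of "\<bar>C\<bar> + 1" B] B by auto
qed

lemma geometric_sum_atLeastLessThan_le:
  fixes q :: real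
  assumes "0 \<le> q" "q < 1" "k \<le> j"
  shows "(\<Sum>i\<in>{k..<j}. q^i) \<le> q^k / (1 - q)"
proof -
  have "(\<Sum>i\<in>{k..<j}. q^i) = (q^k - q^j) / (1 - q)" using assms(3)
  proof (induction j)
    case (Suc j)
    show ?case
    proof (cases "k = Suc j")
      case False
      hence kj: "k \<le> j" using Suc.prems by simp
      have "(\<Sum>i\<in>{k..<Suc j}. q^i) = (q^k - q^j) / (1 - q) + q^j" using Suc.IH kj by simp
      also have "\<dots> = (q^k - q^Suc j) / (1 - q)" using assms(2) by (simp add: field_simps)
      finally show ?thesis .
    qed simp
  qed simp
  also have "\<dots> \<le> q^k / (1 - q)" by (rule divide_right_mono) (use assms in auto)
  finally show ?thesis .
qed

lemma l2_bdd_pointwise_limit: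
  assumes "\<And>n. (\<lambda>j. f j n) \<longlonglongrightarrow> g n" "\<And>j. k \<le> j \<Longrightarrow> l2_bdd (f j) M"
  shows "l2_bdd g M"
  unfolding l2_bdd_def
proof (intro allI impI)
  fix F :: "int set" assume F: "finite F"
  have "(\<lambda>j. L2_set (\<lambda>n. cmod (f j n)) F) \<longlonglongrightarrow> L2_set (\<lambda>n. cmod (g n)) F"
    unfolding L2_set_def by (intro tendsto_intros assms(1))
  thus "L2_set (\<lambda>n. cmod (g n)) F \<le> M"
    by (rule LIMSEQ_le_const2) (use assms(2) F in \<open>auto simp: l2_bdd_def\<close>)
qed

lemma linear_on_l2_tendsto_pointwise:
  assumes lin: "linear_on_l2 K" and K: "\<And>\<psi>. \<psi> \<in> l2 \<Longrightarrow> K \<psi> \<in> l2 \<and> l2norm (K \<psi>) \<le> q * l2norm \<psi>"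
    and \<psi>: "\<psi> \<in> l2" and S: "\<And>j. S j \<in> l2" and lim: "(\<lambda>j. l2norm (\<lambda>m. \<psi> m - S j m)) \<longlonglongrightarrow> 0"
  shows "(\<lambda>j. K (S j) n) \<longlonglongrightarrow> K \<psi> n"
proof -
  have err: "cmod (K \<psi> n - K (S j) n) \<le> q * l2norm (\<lambda>m. \<psi> m - S j m)" for j
  proof -
    have d: "(\<lambda>m. \<psi> m - S j m) \<in> l2" using l2_diff[OF \<psi> S] .
    have "K \<psi> n - K (S j) n = K (\<lambda>m. \<psi> m - S j m) n"
      using linear_on_l2_diff[OF lin \<psi> S] by simp
    also have "cmod \<dots> \<le> l2norm (K (\<lambda>m. \<psi> m - S j m))"
      using l2_bdd_pointwise[OF l2_bdd_l2norm] K[OF d] by blast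
    also have "\<dots> \<le> q * l2norm (\<lambda>m. \<psi> m - S j m)" using K[OF d] by blast
    finally show ?thesis .
  qed
  have "(\<lambda>j. q * l2norm (\<lambda>m. \<psi> m - S j m)) \<longlonglongrightarrow> 0" using tendsto_mult_right_zero[OF lim] .
  hence "(\<lambda>j. K \<psi> n - K (S j) n) \<longlonglongrightarrow> 0"
    by (rule Lim_null_comparison[rotated]) (use err in \<open>simp add: always_eventually\<close>)
  from tendsto_diff[OF tendsto_const[of "K \<psi> n"] this] show ?thesis by simp
qed

text \<open>The solution is the pointwise sum of the Neumann series \<open>\<Sum>i. K\<^sup>i \<phi>\<close>; the bound of
  \<open>l2_bdd\<close> passes to the pointwise limit of the partial sums.\<close>

lemma neumann_series_solution:
  assumes lin: "linear_on_l2 K" and q: "0 \<le> q" "q < 1"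
    and K: "\<And>\<psi>. \<psi> \<in> l2 \<Longrightarrow> K \<psi> \<in> l2 \<and> l2norm (K \<psi>) \<le> q * l2norm \<psi>"
    and \<phi>: "\<phi> \<in> l2"
  shows "\<exists>\<psi>\<in>l2. (\<lambda>n. \<psi> n - K \<psi> n) = \<phi> \<and> l2norm \<psi> \<le> l2norm \<phi> / (1 - q)"
proof -
  define N where "N = l2norm \<phi>"
  have N0: "0 \<le> N" unfolding N_def by (rule l2norm_nonneg)
  define P where "P i = (K ^^ i) \<phi>" for i
  have P: "P i \<in> l2 \<and> l2norm (P i) \<le> q^i * N" for i
  proof (induction i)
    case 0 thus ?case using \<phi> by (simp add: P_def N_def)
  next
    case (Suc i)
    have "l2norm (K (P i)) \<le> q * l2norm (P i)" using K Suc by blast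
    also have "\<dots> \<le> q * (q^i * N)" using Suc q by (intro mult_left_mono) auto
    finally show ?case using K Suc by (simp add: P_def)
  qed
  have P_bdd: "l2_bdd (P i) (q^i * N)" for i
    using l2_bdd_mono[OF l2_bdd_l2norm[OF P[THEN conjunct1]] P[THEN conjunct2]] .
  have summ: "summable (\<lambda>i. P i n)" for n
  proof (rule summable_comparison_test'[where g="\<lambda>i. q^i * N" and N=0])
    show "summable (\<lambda>i. q^i * N)" using q by (intro summable_mult2 summable_geometric) simp
    show "norm (P i n) \<le> q^i * N" for i by (rule l2_bdd_pointwise[OF P_bdd])
  qed
  define \<psi> where "\<psi> n = (\<Sum>i. P i n)" for n
  define S where "S j = (\<lambda>n. \<Sum>i<j. P i n)" for j
  have S_lim: "(\<lambda>j. S j n) \<longlonglongrightarrow> \<psi> n" for n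
    using summable_LIMSEQ[OF summ] unfolding S_def \<psi>_def by simp
  have S_l2: "S j \<in> l2" for j
  proof -
    have "l2_bdd (S j) (\<Sum>i<j. q^i * N)" unfolding S_def by (rule l2_bdd_sum) (auto intro: P_bdd)
    thus ?thesis by (rule l2_bdd_imp_l2)
  qed
  have S_cauchy: "l2_bdd (\<lambda>n. S j n - S k n) (q^k * N / (1 - q))" if "k \<le> j" for j k
  proof -
    have "(\<lambda>n. S j n - S k n) = (\<lambda>n. \<Sum>i\<in>{k..<j}. P i n)"
      unfolding S_def using that by (auto simp: lessThan_atLeast0 intro!: ext sum_diff_nat_ivl)
    moreover have "(\<Sum>i\<in>{k..<j}. q^i * N) \<le> q^k * N / (1 - q)"
      using mult_right_mono[OF geometric_sum_atLeastLessThan_le[OF q that] N0]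
      by (simp add: sum_distrib_right)
    moreover have "l2_bdd (\<lambda>n. \<Sum>i\<in>{k..<j}. P i n) (\<Sum>i\<in>{k..<j}. q^i * N)"
      by (rule l2_bdd_sum) (auto intro: P_bdd)
    ultimately show ?thesis using l2_bdd_mono by simp
  qed
  have tail: "l2_bdd (\<lambda>n. \<psi> n - S k n) (q^k * N / (1 - q))" for k
  proof (rule l2_bdd_pointwise_limit)
    show "(\<lambda>j. S j n - S k n) \<longlonglongrightarrow> \<psi> n - S k n" for n by (intro tendsto_diff S_lim tendsto_const)
    show "l2_bdd (\<lambda>n. S j n - S k n) (q^k * N / (1 - q))" if "k \<le> j" for j using S_cauchy[OF that] .
  qed
  have S0: "S 0 = (\<lambda>n. 0)" unfolding S_def by simp
  have \<psi>: "\<psi> \<in> l2" "l2norm \<psi> \<le> N / (1 - q)" using l2_bdd_imp_l2[OF tail[of 0]] unfolding S0 by simp_all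
  have K_S: "K (S j) = (\<lambda>n. S (Suc j) n - \<phi> n)" for j
  proof (induction j)
    case 0
    show ?case using linear_on_l2_zero[OF lin] S0 by (simp add: S_def P_def)
  next
    case (Suc j)
    have "S (Suc j) = (\<lambda>n. S j n + P j n)" unfolding S_def by simp
    hence "K (S (Suc j)) = (\<lambda>n. K (S j) n + K (P j) n)"
      using linear_on_l2_add[OF lin S_l2 P[THEN conjunct1]] by simp
    thus ?case using Suc.IH by (simp add: S_def P_def fun_eq_iff algebra_simps)
  qed
  have "(\<lambda>j. l2norm (\<lambda>m. \<psi> m - S j m)) \<longlonglongrightarrow> 0"
  proof (rule Lim_null_comparison[rotated])
    show "(\<lambda>j. q^j * N / (1 - q)) \<longlonglongrightarrow> 0"
      using q by (intro tendsto_divide_zero tendsto_mult_left_zero LIMSEQ_power_zero) auto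
    show "\<forall>\<^sub>F j in sequentially. norm (l2norm (\<lambda>m. \<psi> m - S j m)) \<le> q^j * N / (1 - q)"
      using l2_bdd_imp_l2(2)[OF tail] by (simp add: l2norm_nonneg always_eventually)
  qed
  hence "(\<lambda>j. K (S j) n) \<longlonglongrightarrow> K \<psi> n" for n
    using linear_on_l2_tendsto_pointwise[of K q \<psi> S] lin K \<psi>(1) S_l2 by blast
  moreover have "(\<lambda>j. K (S j) n) \<longlonglongrightarrow> \<psi> n - \<phi> n" for n
    unfolding K_S using tendsto_diff[OF LIMSEQ_Suc[OF S_lim] tendsto_const] by simp
  ultimately have "K \<psi> n = \<psi> n - \<phi> n" for n using LIMSEQ_unique by blast
  hence "(\<lambda>n. \<psi> n - K \<psi> n) = \<phi>" by auto
  thus ?thesis using \<psi> unfolding N_def by blast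
qed

lemma cmod_of_real_diff [simp]: "cmod (complex_of_real a - complex_of_real b) = \<bar>a - b\<bar>"
  by (metis norm_of_real of_real_diff)

lemma linear_on_l2_inverse:
  assumes lin: "linear_on_l2 T"
    and B: "\<And>\<psi>. \<psi> \<in> l2 \<Longrightarrow> B \<psi> \<in> l2" "\<And>\<psi>. \<psi> \<in> l2 \<Longrightarrow> B (T \<psi>) = \<psi>"
      "\<And>\<psi>. \<psi> \<in> l2 \<Longrightarrow> T (B \<psi>) = \<psi>"
  shows "linear_on_l2 B"
  unfolding linear_on_l2_def
proof (intro ballI allI)
  fix a b :: "int \<Rightarrow> complex" and c assume a: "a \<in> l2" and b: "b \<in> l2"
  have "T (\<lambda>n. B a n + c * B b n) = (\<lambda>n. a n + c * b n)"
    using lin[unfolded linear_on_l2_def, rule_format, OF B(1)[OF a] B(1)[OF b]] B(3)[OF a] B(3)[OF b]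
    by simp
  thus "B (\<lambda>n. a n + c * b n) = (\<lambda>n. B a n + c * B b n)"
    using B(2)[OF l2_lin_comb[where c=c, OF B(1)[OF a] B(1)[OF b]]] by simp
qed

lemma l2_invertible_minus_small:
  assumes lin: "linear_on_l2 T" and maps: "\<And>\<psi>. \<psi> \<in> l2 \<Longrightarrow> T \<psi> \<in> l2"
    and inv: "l2_invertible T"
  shows "\<exists>e>0. \<forall>w. cmod w < e \<longrightarrow> l2_invertible (\<lambda>\<psi> n. T \<psi> n - w * \<psi> n)"
proof -
  obtain B C where C: "C > 0" and B_l2: "\<And>\<psi>. \<psi> \<in> l2 \<Longrightarrow> B \<psi> \<in> l2"
    and B_norm: "\<And>\<psi>. \<psi> \<in> l2 \<Longrightarrow> l2norm (B \<psi>) \<le> C * l2norm \<psi>"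
    and BT: "\<And>\<psi>. \<psi> \<in> l2 \<Longrightarrow> B (T \<psi>) = \<psi>" and TB: "\<And>\<psi>. \<psi> \<in> l2 \<Longrightarrow> T (B \<psi>) = \<psi>"
    using l2_invertibleE[OF inv] by metis
  have lin_B: "linear_on_l2 B" by (rule linear_on_l2_inverse[OF lin B_l2 BT TB])
  have "l2_invertible (\<lambda>\<psi> n. T \<psi> n - w * \<psi> n)" if w: "cmod w < 1 / (2 * C)" for w
  proof (rule l2_invertibleI)
    have wC: "cmod w * C \<le> 1/2" using w C by (simp add: field_simps)
    define K where "K x = (\<lambda>n. w * B x n)" for x
    have K: "K x \<in> l2 \<and> l2norm (K x) \<le> (cmod w * C) * l2norm x" if "x \<in> l2" for x
    proof
      show "K x \<in> l2" unfolding K_def using l2_scale[OF B_l2[OF that]] .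
      have "l2norm (K x) \<le> cmod w * l2norm (B x)"
        unfolding K_def using l2norm_scale_le[OF B_l2[OF that]] .
      also have "\<dots> \<le> cmod w * (C * l2norm x)" using B_norm[OF that] by (intro mult_left_mono) auto
      finally show "l2norm (K x) \<le> (cmod w * C) * l2norm x" by simp
    qed
    show "linear_on_l2 (\<lambda>\<psi> n. T \<psi> n - w * \<psi> n)"
      using lin unfolding linear_on_l2_def by (auto simp: fun_eq_iff algebra_simps)
    show "(\<lambda>n. T \<psi> n - w * \<psi> n) \<in> l2" if "\<psi> \<in> l2" for \<psi>
      using l2_lin_comb[OF maps[OF that] that, of "- w"] by simp
    show "u = (\<lambda>n. 0)" if u: "u \<in> l2" and Tu: "(\<lambda>n. T u n - w * u n) = (\<lambda>n. 0)" for u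
    proof -
      have "T u = (\<lambda>n. w * u n)" using Tu by (simp add: fun_eq_iff)
      hence "u = B (\<lambda>n. w * u n)" using BT[OF u] by simp
      also have "\<dots> = K u" unfolding K_def by (rule linear_on_l2_scale[OF lin_B u])
      finally have "u = K u" .
      hence "l2norm u \<le> (cmod w * C) * l2norm u" using K[OF u] by simp
      thus ?thesis using l2norm_le_contraction_imp_zero[OF u] wC by simp
    qed
    show "\<exists>\<psi>\<in>l2. (\<lambda>n. T \<psi> n - w * \<psi> n) = \<phi> \<and> l2norm \<psi> \<le> (2 * C) * l2norm \<phi>"
      if \<phi>: "\<phi> \<in> l2" for \<phi>
    proof -
      have lin_K: "linear_on_l2 K"
        using lin_B unfolding linear_on_l2_def K_def by (auto simp: fun_eq_iff algebra_simps)
      obtain x where x: "x \<in> l2" "(\<lambda>n. x n - K x n) = \<phi>" "l2norm x \<le> l2norm \<phi> / (1 - cmod w * C)"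
        using neumann_series_solution[OF lin_K _ _ K \<phi>] wC C by fastforce
      have pos: "0 < 1 - cmod w * C" using wC by simp
      have "l2norm \<phi> \<le> 2 * l2norm \<phi> * (1 - cmod w * C)"
        using mult_left_mono[of "2 * (cmod w * C)" 1 "l2norm \<phi>"] wC l2norm_nonneg[of \<phi>]
        by (simp add: algebra_simps)
      hence "l2norm \<phi> / (1 - cmod w * C) \<le> 2 * l2norm \<phi>" by (simp add: pos_divide_le_eq[OF pos])
      hence "C * l2norm x \<le> C * (2 * l2norm \<phi>)" using x(3) C by (intro mult_left_mono) auto
      hence "l2norm (B x) \<le> (2 * C) * l2norm \<phi>" using B_norm[OF x(1)] by simp
      moreover have "(\<lambda>n. T (B x) n - w * B x n) = \<phi>" using TB[OF x(1)] x(2) unfolding K_def by simp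
      ultimately show ?thesis using B_l2[OF x(1)] by blast
    qed
  qed
  thus ?thesis using C by (intro exI[of _ "1 / (2 * C)"]) auto
qed

definition approx_null :: "((int \<Rightarrow> complex) \<Rightarrow> (int \<Rightarrow> complex)) \<Rightarrow> bool" where
  "approx_null T \<longleftrightarrow>
     (\<forall>\<eta>>0. \<exists>\<psi>\<in>l2. \<psi> \<noteq> (\<lambda>n. 0) \<and> T \<psi> \<in> l2 \<and> l2norm (T \<psi>) \<le> \<eta> * l2norm \<psi>)"

lemma approx_null_not_invertible:
  assumes "approx_null T"
  shows "\<not> l2_invertible T"
proof
  assume "l2_invertible T"
  then obtain B C where C: "C > 0" and B_norm: "\<And>\<psi>. \<psi> \<in> l2 \<Longrightarrow> l2norm (B \<psi>) \<le> C * l2norm \<psi>"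
    and BT: "\<And>\<psi>. \<psi> \<in> l2 \<Longrightarrow> B (T \<psi>) = \<psi>" by (metis l2_invertibleE)
  have "1 / (2 * C) > 0" using C by simp
  then obtain \<psi> where \<psi>: "\<psi> \<in> l2" "\<psi> \<noteq> (\<lambda>n. 0)" "T \<psi> \<in> l2" "l2norm (T \<psi>) \<le> 1 / (2 * C) * l2norm \<psi>"
    using assms unfolding approx_null_def by blast
  have "l2norm \<psi> \<le> C * l2norm (T \<psi>)" using B_norm[OF \<psi>(3)] BT[OF \<psi>(1)] by simp
  also have "\<dots> \<le> C * (1 / (2 * C) * l2norm \<psi>)" using \<psi>(4) C by (intro mult_left_mono) auto
  also have "\<dots> = (1/2) * l2norm \<psi>" using C by simp
  finally have "\<psi> = (\<lambda>n. 0)" by (rule l2norm_le_contraction_imp_zero[OF \<psi>(1)]) simp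
  thus False using \<psi>(2) by simp
qed

section \<open>Discrete Schroedinger operators\<close>

definition schrod_minus :: "(int \<Rightarrow> real) \<Rightarrow> real \<Rightarrow> (int \<Rightarrow> complex) \<Rightarrow> (int \<Rightarrow> complex)" where
  "schrod_minus V z = (\<lambda>\<psi> n. schrod V \<psi> n - complex_of_real z * \<psi> n)"

lemma Sp_eq: "Sp V = {z. \<not> l2_invertible (schrod_minus V z)}"
  unfolding Sp_def schrod_minus_def ..

lemma schrod_minus_apply:
  "schrod_minus V z \<psi> n = \<psi> (n - 1) + \<psi> (n + 1) + complex_of_real (V n - z) * \<psi> n"
  unfolding schrod_minus_def schrod_def by (simp add: algebra_simps)

lemma linear_on_l2_schrod_minus: "linear_on_l2 (schrod_minus V z)"
  unfolding linear_on_l2_def schrod_minus_apply by (auto simp: fun_eq_iff algebra_simps)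

lemma l2_bdd_potential:
  assumes V: "\<And>n. \<bar>V n\<bar> \<le> B" and "l2_bdd \<psi> M"
  shows "l2_bdd (\<lambda>n. complex_of_real (V n - z) * \<psi> n) ((B + \<bar>z\<bar>) * M)"
proof (rule l2_bdd_dominated[OF assms(2)])
  show "0 \<le> B + \<bar>z\<bar>" using V[of 0] by simp
  show "cmod (complex_of_real (V n - z) * \<psi> n) \<le> (B + \<bar>z\<bar>) * cmod (\<psi> n)" for n
    using V[of n] by (simp add: norm_mult mult_right_mono)
qed

lemma l2_bdd_schrod_minus:
  assumes V: "\<And>n. \<bar>V n\<bar> \<le> B" and "l2_bdd \<psi> M"
  shows "l2_bdd (schrod_minus V z \<psi>) ((2 + B + \<bar>z\<bar>) * M)"
  using l2_bdd_add[OF l2_bdd_neighbours[OF assms(2)] l2_bdd_potential[where z=z, OF assms]]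
  unfolding schrod_minus_apply[abs_def] by (simp add: algebra_simps)

lemma schrod_minus_l2:
  assumes V: "\<And>n. \<bar>V n\<bar> \<le> B" and "\<psi> \<in> l2"
  shows "schrod_minus V z \<psi> \<in> l2" "l2norm (schrod_minus V z \<psi>) \<le> (2 + B + \<bar>z\<bar>) * l2norm \<psi>"
  using l2_bdd_imp_l2[OF l2_bdd_schrod_minus[OF V l2_bdd_l2norm[OF assms(2)]]] by auto

lemma closed_Sp:
  assumes V: "\<And>n. \<bar>V n\<bar> \<le> B"
  shows "closed (Sp V)"
  unfolding closed_def open_dist
proof (intro ballI)
  fix z0 assume "z0 \<in> - Sp V"
  hence "l2_invertible (schrod_minus V z0)" unfolding Sp_eq by simp
  then obtain e where e: "e > 0"
    "\<And>w. cmod w < e \<Longrightarrow> l2_invertible (\<lambda>\<psi> n. schrod_minus V z0 \<psi> n - w * \<psi> n)"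
    using l2_invertible_minus_small[OF linear_on_l2_schrod_minus schrod_minus_l2(1)[where V=V, OF V]] by blast
  have "l2_invertible (schrod_minus V z)" if "dist z z0 < e" for z
  proof -
    have "schrod_minus V z = (\<lambda>\<psi> n. schrod_minus V z0 \<psi> n - complex_of_real (z - z0) * \<psi> n)"
      by (auto simp: fun_eq_iff schrod_minus_apply algebra_simps)
    thus ?thesis using e(2)[of "complex_of_real (z - z0)"] that by (simp add: dist_real_def)
  qed
  thus "\<exists>e>0. \<forall>y. dist y z0 < e \<longrightarrow> y \<in> - Sp V" using e(1) unfolding Sp_eq by auto
qed

lemma approx_null_imp_Sp: "approx_null (schrod_minus V z) \<Longrightarrow> z \<in> Sp V"
  unfolding Sp_eq using approx_null_not_invertible by blast

text \<open>Diagonal dominance: the hopping part has norm at most 2, so \<open>A\<^sub>V - z\<close> is inverted by a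
  Neumann series around its diagonal as soon as the diagonal stays away from 0 by more than 2.\<close>

lemma schrod_minus_invertible_if_far:
  assumes V: "\<And>n. \<bar>V n\<bar> \<le> B" and m: "m > 2" and far: "\<And>n. m \<le> \<bar>V n - z\<bar>"
  shows "l2_invertible (schrod_minus V z)"
proof (rule l2_invertibleI[OF linear_on_l2_schrod_minus])
  show "\<psi> \<in> l2 \<Longrightarrow> schrod_minus V z \<psi> \<in> l2" for \<psi> by (rule schrod_minus_l2(1)[OF V])
  have nz: "V n - z \<noteq> 0" for n using far[of n] m by auto
  define K where "K \<psi> = (\<lambda>n. - (\<psi> (n - 1) + \<psi> (n + 1)) / complex_of_real (V n - z))"
    for \<psi> :: "int \<Rightarrow> complex"
  have div_bdd: "l2_bdd (\<lambda>n. \<psi> n / complex_of_real (V n - z)) ((1/m) * M)" if "l2_bdd \<psi> M" for \<psi> M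
  proof (rule l2_bdd_dominated[OF that])
    show "cmod (\<psi> n / complex_of_real (V n - z)) \<le> 1/m * cmod (\<psi> n)" for n
      using far[of n] m by (simp add: norm_divide divide_left_mono)
  qed (use m in simp)
  have K_bdd: "l2_bdd (K \<psi>) ((2/m) * M)" if "l2_bdd \<psi> M" for \<psi> M
  proof -
    have "l2_bdd (\<lambda>n. - (\<psi> (n - 1) + \<psi> (n + 1))) (1 * (2 * M))"
      by (rule l2_bdd_dominated[OF l2_bdd_neighbours[OF that]]) (simp_all only: norm_minus_cancel mult_1_left order_refl zero_le_one)
    from div_bdd[OF this] show ?thesis unfolding K_def by simp
  qed
  have K_eq: "schrod_minus V z \<psi> n = complex_of_real (V n - z) * (\<psi> n - K \<psi> n)" for \<psi> n
    using nz[of n] unfolding schrod_minus_apply K_def by (simp add: field_simps)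
  show "u = (\<lambda>n. 0)" if u: "u \<in> l2" and Tu: "schrod_minus V z u = (\<lambda>n. 0)" for u
  proof -
    have "u = K u" using Tu nz by (auto simp: fun_eq_iff K_eq)
    hence "l2norm u \<le> (2/m) * l2norm u" using l2_bdd_imp_l2(2)[OF K_bdd[OF l2_bdd_l2norm[OF u]]] by simp
    thus ?thesis by (rule l2norm_le_contraction_imp_zero[OF u]) (use m in simp)
  qed
  show "\<exists>\<psi>\<in>l2. schrod_minus V z \<psi> = \<phi> \<and> l2norm \<psi> \<le> (1/m / (1 - 2/m)) * l2norm \<phi>"
    if \<phi>: "\<phi> \<in> l2" for \<phi>
  proof -
    define \<phi>' where "\<phi>' = (\<lambda>n. \<phi> n / complex_of_real (V n - z))"
    have \<phi>': "\<phi>' \<in> l2" "l2norm \<phi>' \<le> (1/m) * l2norm \<phi>"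
      using l2_bdd_imp_l2[OF div_bdd[OF l2_bdd_l2norm[OF \<phi>]]] unfolding \<phi>'_def by auto
    have lin_K: "linear_on_l2 K"
      unfolding linear_on_l2_def K_def by (auto simp: fun_eq_iff divide_inverse algebra_simps)
    have K: "K \<psi> \<in> l2 \<and> l2norm (K \<psi>) \<le> 2/m * l2norm \<psi>" if "\<psi> \<in> l2" for \<psi>
      using l2_bdd_imp_l2[OF K_bdd[OF l2_bdd_l2norm[OF that]]] by blast
    obtain \<psi> where \<psi>: "\<psi> \<in> l2" "(\<lambda>n. \<psi> n - K \<psi> n) = \<phi>'" "l2norm \<psi> \<le> l2norm \<phi>' / (1 - 2/m)"
      using neumann_series_solution[OF lin_K _ _ K \<phi>'(1)] m by auto
    have "schrod_minus V z \<psi> n = \<phi> n" for n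
      using fun_cong[OF \<psi>(2), of n] nz[of n] unfolding K_eq \<phi>'_def by simp
    hence "schrod_minus V z \<psi> = \<phi>" ..
    moreover have "l2norm \<phi>' / (1 - 2/m) \<le> (1/m) * l2norm \<phi> / (1 - 2/m)"
      using \<phi>'(2) m by (intro divide_right_mono) auto
    ultimately show ?thesis using \<psi> by auto
  qed
qed

text \<open>On a plateau \<open>V = c\<close> of length \<open>L\<close> the truncated plane wave \<open>e\<^sup>i\<^sup>n\<^sup>\<theta>\<close> with
  \<open>2 cos \<theta> = z - c\<close> is an exact solution except at the four sites around the two ends, so its
  defect is \<open>O(1)\<close> while its norm is \<open>\<surd>(L + 1)\<close>.\<close>

lemma Sp_if_long_plateaus:
  assumes V: "\<And>n. \<bar>V n\<bar> \<le> B"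
    and plateaus: "\<And>L::nat. \<exists>a. \<forall>n. a \<le> n \<and> n \<le> a + int L \<longrightarrow> V n = c"
    and z: "\<bar>z - c\<bar> \<le> 2"
  shows "z \<in> Sp V"
proof (rule approx_null_imp_Sp, unfold approx_null_def, intro allI impI)
  fix \<eta> :: real assume \<eta>: "\<eta> > 0"
  define K where "K = 2 + B + \<bar>z\<bar>"
  have K: "K > 0" unfolding K_def using V[of 0] by simp
  define L where "L = nat \<lceil>(2 * K / \<eta>)\<^sup>2\<rceil>"
  obtain a where a: "\<And>n. a \<le> n \<Longrightarrow> n \<le> a + int L \<Longrightarrow> V n = c" using plateaus[of L] by blast
  define \<theta> where "\<theta> = arccos ((z - c) / 2)"
  have cos_\<theta>: "2 * cos \<theta> = z - c" unfolding \<theta>_def using z by (subst cos_arccos) auto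
  define \<psi> where "\<psi> n = (if a \<le> n \<and> n \<le> a + int L then cis (of_int n * \<theta>) else 0)" for n
  have \<psi>_le_1: "cmod (\<psi> n) \<le> 1" for n unfolding \<psi>_def by simp
  have \<psi>: "\<psi> \<in> l2" using l2_bdd_imp_l2(1)[OF l2_bdd_finite_support[of "{a..a + int L}" \<psi> 1]]
    by (auto simp: \<psi>_def)
  have "\<psi> a \<noteq> 0" unfolding \<psi>_def by simp
  hence \<psi>_nz: "\<psi> \<noteq> (\<lambda>n. 0)" by force
  have \<psi>_norm: "sqrt (real (L + 1)) \<le> l2norm \<psi>"
  proof -
    have "L2_set (\<lambda>n. cmod (\<psi> n)) {a..a + int L} = L2_set (\<lambda>n. 1) {a..a + int L}"
      by (rule L2_set_cong) (auto simp: \<psi>_def)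
    thus ?thesis using L2_set_le_l2norm[OF \<psi>, of "{a..a + int L}"] by (simp add: L2_set_constant add.commute)
  qed
  define ends where "ends = {a - 1, a, a + int L, a + int L + 1}"
  have defect_0: "schrod_minus V z \<psi> n = 0" if "n \<notin> ends" for n
  proof (cases "a < n \<and> n < a + int L")
    case True
    have "schrod_minus V z \<psi> n
        = cis (of_int n * \<theta> - \<theta>) + cis (of_int n * \<theta> + \<theta>) + complex_of_real (c - z) * cis (of_int n * \<theta>)"
      unfolding schrod_minus_apply using True a[of n] by (simp add: \<psi>_def algebra_simps)
    also have "\<dots> = complex_of_real (2 * cos \<theta> + (c - z)) * cis (of_int n * \<theta>)"
      by (simp add: complex_eq_iff cos_add cos_diff sin_add sin_diff algebra_simps)
    finally show ?thesis using cos_\<theta> by simp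
  next
    case False
    hence "n < a - 1 \<or> n > a + int L + 1" using that unfolding ends_def by auto
    thus ?thesis unfolding schrod_minus_apply \<psi>_def by auto
  qed
  have defect_le: "cmod (schrod_minus V z \<psi> n) \<le> K" for n
  proof -
    have "cmod (schrod_minus V z \<psi> n) \<le> cmod (\<psi> (n - 1)) + cmod (\<psi> (n + 1)) + \<bar>V n - z\<bar> * cmod (\<psi> n)"
      unfolding schrod_minus_apply by (metis norm_triangle_le norm_triangle_ineq add_mono norm_mult
          norm_of_real order_refl)
    also have "\<dots> \<le> 1 + 1 + (B + \<bar>z\<bar>) * 1"
      using \<psi>_le_1 V[of n] by (intro add_mono mult_mono) auto
    finally show ?thesis unfolding K_def by simp
  qed
  have "card ends \<le> 4" unfolding ends_def by (auto simp: card_insert_if)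
  hence "sqrt (card ends) * K \<le> 2 * K" using K real_sqrt_le_mono[of "card ends" 4]
    by (intro mult_right_mono) auto
  also have "2 * K \<le> \<eta> * sqrt (real (L + 1))"
  proof -
    have "(2 * K / \<eta>)\<^sup>2 \<le> real (L + 1)" unfolding L_def by linarith
    hence "2 * K / \<eta> \<le> sqrt (real (L + 1))" by (simp add: real_le_rsqrt)
    thus ?thesis using \<eta> by (simp add: field_simps)
  qed
  also have "\<dots> \<le> \<eta> * l2norm \<psi>" using \<psi>_norm \<eta> by simp
  finally have "l2_bdd (schrod_minus V z \<psi>) (\<eta> * l2norm \<psi>)"
    using l2_bdd_mono[OF l2_bdd_finite_support[of ends, OF _ defect_0 defect_le]] ends_def by simp
  thus "\<exists>\<psi>\<in>l2. \<psi> \<noteq> (\<lambda>n. 0) \<and> schrod_minus V z \<psi> \<in> l2 \<and> l2norm (schrod_minus V z \<psi>) \<le> \<eta> * l2norm \<psi>"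
    using \<psi> \<psi>_nz l2_bdd_imp_l2 by blast
qed

definition step_potential :: "int \<Rightarrow> real" where
  "step_potential n = (if n < 0 then 2 else 4)"

lemma abs_step_potential_le: "\<bar>step_potential n\<bar> \<le> 4"
  unfolding step_potential_def by simp

lemma Sp_step_potential: "Sp step_potential = {0..6}"
proof
  show "{0..6} \<subseteq> Sp step_potential"
  proof
    fix z :: real assume z: "z \<in> {0..6}"
    show "z \<in> Sp step_potential"
    proof (cases "z \<le> 4")
      case True
      show ?thesis
      proof (rule Sp_if_long_plateaus[where c=2, OF abs_step_potential_le])
        show "\<exists>a. \<forall>n. a \<le> n \<and> n \<le> a + int L \<longrightarrow> step_potential n = 2" for L
          by (rule exI[where x="- int L - 1"]) (auto simp: step_potential_def)
      qed (use z True in auto)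
    next
      case False
      show ?thesis
      proof (rule Sp_if_long_plateaus[where c=4, OF abs_step_potential_le])
        show "\<exists>a. \<forall>n. a \<le> n \<and> n \<le> a + int L \<longrightarrow> step_potential n = 4" for L
          by (rule exI[where x=0]) (auto simp: step_potential_def)
      qed (use z False in auto)
    qed
  qed
  show "Sp step_potential \<subseteq> {0..6}"
  proof
    fix z assume z: "z \<in> Sp step_potential"
    show "z \<in> {0..6}"
    proof (rule ccontr)
      assume "z \<notin> {0..6}"
      hence "l2_invertible (schrod_minus step_potential z)"
        by (intro schrod_minus_invertible_if_far[OF abs_step_potential_le, of "min \<bar>2 - z\<bar> \<bar>4 - z\<bar>"])
          (auto simp: step_potential_def)
      thus False using z unfolding Sp_eq by simp
    qed
  qed
qed

section \<open>Approximate eigenvalues of symmetric operators\<close>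

definition l2_inner :: "(int \<Rightarrow> complex) \<Rightarrow> (int \<Rightarrow> complex) \<Rightarrow> real" where
  "l2_inner a b = infsum (\<lambda>n. Re (a n * cnj (b n))) UNIV"

lemma summable_on_l2_inner:
  assumes "a \<in> l2" "b \<in> l2"
  shows "(\<lambda>n. Re (a n * cnj (b n))) summable_on UNIV"
proof (rule abs_summable_summable)
  have s: "(\<lambda>n. (cmod (a n))\<^sup>2 + (cmod (b n))\<^sup>2) summable_on UNIV"
    using summable_on_add assms unfolding l2_def by blast
  show "(\<lambda>n. norm (Re (a n * cnj (b n)))) summable_on UNIV"
  proof (rule summable_on_comparison_test[OF s])
    fix n
    have "norm (Re (a n * cnj (b n))) \<le> cmod (a n) * cmod (b n)"
      by (metis abs_Re_le_cmod real_norm_def norm_mult complex_mod_cnj)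
    also have "\<dots> \<le> (cmod (a n))\<^sup>2 + (cmod (b n))\<^sup>2"
      using sum_squares_ge_zero[of "cmod (a n) - cmod (b n)" 0]
      by (simp add: power2_eq_square algebra_simps) (smt (verit) mult_nonneg_nonneg norm_ge_zero)
    finally show "norm (Re (a n * cnj (b n))) \<le> (cmod (a n))\<^sup>2 + (cmod (b n))\<^sup>2" .
  qed auto
qed

lemma l2norm_power2: "(l2norm a)\<^sup>2 = infsum (\<lambda>n. (cmod (a n))\<^sup>2) UNIV"
  unfolding l2norm_def by (simp add: infsum_nonneg)

lemma l2_inner_self: "l2_inner a a = (l2norm a)\<^sup>2"
  unfolding l2norm_power2 l2_inner_def
  by (rule infsum_cong) (simp add: complex_mult_cnj cmod_power2)

lemma l2_inner_commute: "l2_inner a b = l2_inner b a"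
  unfolding l2_inner_def by (rule infsum_cong) (simp add: algebra_simps)

lemma l2_inner_add_left:
  assumes "a1 \<in> l2" "a2 \<in> l2" "b \<in> l2"
  shows "l2_inner (\<lambda>n. a1 n + a2 n) b = l2_inner a1 b + l2_inner a2 b"
  unfolding l2_inner_def
  using infsum_add[OF summable_on_l2_inner[OF assms(1,3)] summable_on_l2_inner[OF assms(2,3)]]
  by (simp add: algebra_simps)

lemma l2_inner_scaleR_left:
  assumes "a \<in> l2" "b \<in> l2"
  shows "l2_inner (\<lambda>n. complex_of_real c * a n) b = c * l2_inner a b"
  unfolding l2_inner_def
  using infsum_cmult_right[OF summable_on_l2_inner[OF assms], of c] by (simp add: algebra_simps)

lemma l2_inner_shift: "l2_inner (\<lambda>n. a (n + k)) b = l2_inner a (\<lambda>n. b (n - k))"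
proof -
  have "bij_betw (\<lambda>n::int. n + k) UNIV UNIV" by (rule bij_betwI[where g="\<lambda>n. n - k"]) auto
  from infsum_reindex_bij_betw[OF this, of "\<lambda>m. Re (a m * cnj (b (m - k)))"]
  show ?thesis unfolding l2_inner_def by simp
qed

lemma l2_inner_potential:
  "l2_inner (\<lambda>n. complex_of_real (w n) * a n) b = l2_inner a (\<lambda>n. complex_of_real (w n) * b n)"
  unfolding l2_inner_def by (rule infsum_cong) (simp add: algebra_simps)

lemma l2norm_add_scaleR_power2:
  assumes "a \<in> l2" "b \<in> l2"
  shows "(l2norm (\<lambda>n. a n + complex_of_real t * b n))\<^sup>2
    = (l2norm a)\<^sup>2 + 2 * t * l2_inner a b + t\<^sup>2 * (l2norm b)\<^sup>2"
proof -
  have sq: "(\<lambda>n. (cmod (f n))\<^sup>2) summable_on UNIV" if "f \<in> l2" for f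
    using that unfolding l2_def by simp
  have pt: "(cmod (a n + complex_of_real t * b n))\<^sup>2
      = (cmod (a n))\<^sup>2 + (2 * t * Re (a n * cnj (b n)) + t\<^sup>2 * (cmod (b n))\<^sup>2)" for n
    by (simp only: cmod_power2) (simp add: power2_eq_square algebra_simps)
  have s1: "(\<lambda>n. 2 * t * Re (a n * cnj (b n))) summable_on UNIV"
    using summable_on_cmult_right[OF summable_on_l2_inner[OF assms]] by simp
  have s2: "(\<lambda>n. t\<^sup>2 * (cmod (b n))\<^sup>2) summable_on UNIV"
    using summable_on_cmult_right[OF sq[OF assms(2)]] by simp
  show ?thesis
    unfolding l2norm_power2 pt l2_inner_def
    by (simp only: infsum_add[OF sq[OF assms(1)] summable_on_add[OF s1 s2]] infsum_add[OF s1 s2]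
        infsum_cmult_right[OF summable_on_l2_inner[OF assms]] infsum_cmult_right[OF sq[OF assms(2)]]
        add.assoc)
qed

lemma l2_inner_schrod_minus:
  assumes V: "\<And>n. \<bar>V n\<bar> \<le> B" and a: "a \<in> l2" and b: "b \<in> l2"
  shows "l2_inner (schrod_minus V z a) b = l2_inner a (schrod_minus V z b)"
proof -
  have split: "l2_inner (schrod_minus V z f) g
      = l2_inner (\<lambda>n. f (n - 1)) g + l2_inner (\<lambda>n. f (n + 1)) g
        + l2_inner (\<lambda>n. complex_of_real (V n - z) * f n) g" if f: "f \<in> l2" and g: "g \<in> l2" for f g
  proof -
    have f_shift: "(\<lambda>n. f (n - 1)) \<in> l2" "(\<lambda>n. f (n + 1)) \<in> l2"
      using l2_shift[OF f, of "-1"] l2_shift[OF f, of 1] by simp_all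
    have "(\<lambda>n. complex_of_real (V n - z) * f n) \<in> l2"
      using l2_bdd_imp_l2[OF l2_bdd_potential[where V=V, OF V l2_bdd_l2norm[OF f]]] by blast
    thus ?thesis unfolding schrod_minus_apply[abs_def]
      using l2_inner_add_left[OF l2_add[OF f_shift] _ g] l2_inner_add_left[OF f_shift g] by simp
  qed
  have "l2_inner (schrod_minus V z a) b
      = l2_inner a (\<lambda>n. b (n + 1)) + l2_inner a (\<lambda>n. b (n - 1))
        + l2_inner a (\<lambda>n. complex_of_real (V n - z) * b n)"
    unfolding split[OF a b] l2_inner_potential
    using l2_inner_shift[of a 1 b] l2_inner_shift[of a "-1" b] by simp
  also have "\<dots> = l2_inner (schrod_minus V z b) a"
    unfolding split[OF b a] by (simp add: l2_inner_commute)
  finally show ?thesis by (simp add: l2_inner_commute)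
qed

lemma best_lower_bound:
  assumes "\<psi>\<^sub>0 \<in> l2" "\<psi>\<^sub>0 \<noteq> (\<lambda>n. 0)" "l2norm (S \<psi>\<^sub>0) \<le> \<eta> * l2norm \<psi>\<^sub>0"
  obtains c where "0 \<le> c" "c \<le> \<eta>" "\<And>u. u \<in> l2 \<Longrightarrow> c * l2norm u \<le> l2norm (S u)"
    "\<And>h. h > 0 \<Longrightarrow> \<exists>\<psi>\<in>l2. \<psi> \<noteq> (\<lambda>n. 0) \<and> l2norm (S \<psi>) \<le> (c + h) * l2norm \<psi>"
proof -
  define R where "R = {l2norm (S \<psi>) / l2norm \<psi> | \<psi>. \<psi> \<in> l2 \<and> \<psi> \<noteq> (\<lambda>n. 0)}"
  have R_ne: "R \<noteq> {}" unfolding R_def using assms by blast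
  have R_bdd: "bdd_below R" unfolding R_def by (auto intro!: bdd_belowI divide_nonneg_nonneg l2norm_nonneg)
  have ratio_ge: "Inf R \<le> l2norm (S \<psi>) / l2norm \<psi>" if "\<psi> \<in> l2" "\<psi> \<noteq> (\<lambda>n. 0)" for \<psi>
    by (rule cInf_lower[OF _ R_bdd]) (use that in \<open>auto simp: R_def\<close>)
  show ?thesis
  proof (rule that)
    show "0 \<le> Inf R"
      using R_ne unfolding R_def by (auto intro!: cInf_greatest divide_nonneg_nonneg l2norm_nonneg)
    have "l2norm (S \<psi>\<^sub>0) / l2norm \<psi>\<^sub>0 \<le> \<eta>"
      using assms(3) l2norm_pos[OF assms(1,2)] by (simp add: pos_divide_le_eq)
    thus "Inf R \<le> \<eta>" using ratio_ge[OF assms(1,2)] by linarith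
    show "Inf R * l2norm u \<le> l2norm (S u)" if "u \<in> l2" for u
      using ratio_ge[OF that] l2norm_pos[OF that] l2norm_nonneg[of "S u"] l2norm_eq_0_iff[OF that]
      by (cases "u = (\<lambda>n. 0)") (simp_all add: le_divide_eq)
    show "\<exists>\<psi>\<in>l2. \<psi> \<noteq> (\<lambda>n. 0) \<and> l2norm (S \<psi>) \<le> (Inf R + h) * l2norm \<psi>" if "h > 0" for h
    proof -
      have "Inf R < Inf R + h" using \<open>h > 0\<close> by simp
      then obtain x where "x \<in> R" "x < Inf R + h" using cInf_less_iff[OF R_ne R_bdd] by blast
      then obtain \<psi> where "\<psi> \<in> l2" "\<psi> \<noteq> (\<lambda>n. 0)" "l2norm (S \<psi>) / l2norm \<psi> < Inf R + h"
        unfolding R_def by blast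
      thus ?thesis using l2norm_pos by (force simp: divide_less_eq)
    qed
  qed
qed

text \<open>If \<open>c\<close> is a lower bound for the symmetric operator \<open>S\<close>, testing it on \<open>\<psi> + t \<phi>\<close> with
  \<open>\<phi> = S\<^sup>2 \<psi> - c\<^sup>2 \<psi>\<close> and \<open>t = -1/s\<^sub>0\<^sup>2\<close> shows that \<open>\<phi>\<close> is small whenever \<open>\<psi>\<close> nearly attains the
  bound.\<close>

lemma symmetric_square_defect_le:
  assumes lin: "linear_on_l2 S"
    and S: "\<And>\<psi>. \<psi> \<in> l2 \<Longrightarrow> S \<psi> \<in> l2 \<and> l2norm (S \<psi>) \<le> s\<^sub>0 * l2norm \<psi>"
    and symm: "\<And>a b. a \<in> l2 \<Longrightarrow> b \<in> l2 \<Longrightarrow> l2_inner (S a) b = l2_inner a (S b)"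
    and s\<^sub>0: "s\<^sub>0 > 0" and lower: "\<And>u. u \<in> l2 \<Longrightarrow> c * l2norm u \<le> l2norm (S u)" and c: "c \<ge> 0"
    and \<psi>: "\<psi> \<in> l2"
  shows "(l2norm (\<lambda>n. S (S \<psi>) n - complex_of_real (c\<^sup>2) * \<psi> n))\<^sup>2
    \<le> s\<^sub>0\<^sup>2 * ((l2norm (S \<psi>))\<^sup>2 - c\<^sup>2 * (l2norm \<psi>)\<^sup>2)"
proof -
  define \<phi> where "\<phi> = (\<lambda>n. S (S \<psi>) n - complex_of_real (c\<^sup>2) * \<psi> n)"
  have S\<psi>: "S \<psi> \<in> l2" using S[OF \<psi>] by blast
  have \<phi>: "\<phi> \<in> l2" unfolding \<phi>_def using l2_diff[OF conjunct1[OF S[OF S\<psi>]] l2_scale[OF \<psi>]] .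
  have S\<phi>: "S \<phi> \<in> l2" using S[OF \<phi>] by blast
  define t where "t = - 1 / s\<^sub>0\<^sup>2"
  define u where "u = (\<lambda>n. \<psi> n + complex_of_real t * \<phi> n)"
  have u: "u \<in> l2" unfolding u_def by (rule l2_lin_comb[OF \<psi> \<phi>])
  have Su: "S u = (\<lambda>n. S \<psi> n + complex_of_real t * S \<phi> n)"
    unfolding u_def using lin \<psi> \<phi> unfolding linear_on_l2_def by blast
  have "(c * l2norm u)\<^sup>2 \<le> (l2norm (S u))\<^sup>2"
    using lower[OF u] c l2norm_nonneg[of u] by (intro power_mono) auto
  moreover have "(l2norm u)\<^sup>2 = (l2norm \<psi>)\<^sup>2 + 2 * t * l2_inner \<psi> \<phi> + t\<^sup>2 * (l2norm \<phi>)\<^sup>2"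
    unfolding u_def by (rule l2norm_add_scaleR_power2[OF \<psi> \<phi>])
  moreover have "(l2norm (S u))\<^sup>2
      = (l2norm (S \<psi>))\<^sup>2 + 2 * t * l2_inner (S \<psi>) (S \<phi>) + t\<^sup>2 * (l2norm (S \<phi>))\<^sup>2"
    unfolding Su by (rule l2norm_add_scaleR_power2[OF S\<psi> S\<phi>])
  ultimately have "c\<^sup>2 * ((l2norm \<psi>)\<^sup>2 + 2 * t * l2_inner \<psi> \<phi> + t\<^sup>2 * (l2norm \<phi>)\<^sup>2)
      \<le> (l2norm (S \<psi>))\<^sup>2 + 2 * t * l2_inner (S \<psi>) (S \<phi>) + t\<^sup>2 * (l2norm (S \<phi>))\<^sup>2"
    by (simp add: power_mult_distrib)
  moreover have "l2_inner (S \<psi>) (S \<phi>) = (l2norm \<phi>)\<^sup>2 + c\<^sup>2 * l2_inner \<psi> \<phi>"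
  proof -
    have SS\<psi>: "S (S \<psi>) = (\<lambda>n. \<phi> n + complex_of_real (c\<^sup>2) * \<psi> n)" unfolding \<phi>_def by simp
    have "l2_inner (S \<psi>) (S \<phi>) = l2_inner (S (S \<psi>)) \<phi>" using symm[OF S\<psi> \<phi>] by simp
    also have "\<dots> = l2_inner \<phi> \<phi> + l2_inner (\<lambda>n. complex_of_real (c\<^sup>2) * \<psi> n) \<phi>"
      unfolding SS\<psi> by (rule l2_inner_add_left[OF \<phi> l2_scale[OF \<psi>] \<phi>])
    finally show ?thesis unfolding l2_inner_self l2_inner_scaleR_left[OF \<psi> \<phi>] .
  qed
  ultimately have ineq: "c\<^sup>2 * ((l2norm \<psi>)\<^sup>2 + 2 * t * l2_inner \<psi> \<phi> + t\<^sup>2 * (l2norm \<phi>)\<^sup>2)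
      \<le> (l2norm (S \<psi>))\<^sup>2 + 2 * t * ((l2norm \<phi>)\<^sup>2 + c\<^sup>2 * l2_inner \<psi> \<phi>) + t\<^sup>2 * (l2norm (S \<phi>))\<^sup>2"
    by simp
  have "l2norm (S \<phi>) \<le> s\<^sub>0 * l2norm \<phi>" using S[OF \<phi>] by blast
  from power_mono[OF this l2norm_nonneg]
  have "t\<^sup>2 * (l2norm (S \<phi>))\<^sup>2 \<le> t\<^sup>2 * (s\<^sub>0\<^sup>2 * (l2norm \<phi>)\<^sup>2)"
    by (intro mult_left_mono) (simp_all add: power_mult_distrib)
  moreover have "2 * t * (l2norm \<phi>)\<^sup>2 + t\<^sup>2 * (s\<^sub>0\<^sup>2 * (l2norm \<phi>)\<^sup>2) = - (l2norm \<phi>)\<^sup>2 / s\<^sub>0\<^sup>2"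
    unfolding t_def using s\<^sub>0 by (simp add: field_simps power2_eq_square)
  moreover have nonneg: "0 \<le> c\<^sup>2 * (t\<^sup>2 * (l2norm \<phi>)\<^sup>2)" by simp
  ultimately have "(l2norm \<phi>)\<^sup>2 / s\<^sub>0\<^sup>2 \<le> (l2norm (S \<psi>))\<^sup>2 - c\<^sup>2 * (l2norm \<psi>)\<^sup>2"
    using ineq by (simp add: algebra_simps) (use nonneg in linarith)
  thus ?thesis unfolding \<phi>_def using s\<^sub>0 by (simp add: divide_le_eq mult.commute)
qed

lemma plus_or_minus_lower_bound:
  assumes "a \<in> l2" "\<psi> \<in> l2" "c \<ge> 0"
  obtains \<sigma> :: real where "\<sigma> \<in> {-1, 1}"
    "c * l2norm \<psi> \<le> l2norm (\<lambda>n. a n + complex_of_real (\<sigma> * c) * \<psi> n)"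
proof -
  define \<sigma> :: real where "\<sigma> = (if 0 \<le> l2_inner a \<psi> then 1 else -1)"
  have \<sigma>: "\<sigma> \<in> {-1, 1}" "0 \<le> \<sigma> * l2_inner a \<psi>" unfolding \<sigma>_def by auto
  have "(c * l2norm \<psi>)\<^sup>2 \<le> (l2norm a)\<^sup>2 + 2 * c * (\<sigma> * l2_inner a \<psi>) + (c * l2norm \<psi>)\<^sup>2"
    using \<sigma>(2) assms(3) by simp
  also have "\<dots> = (l2norm (\<lambda>n. a n + complex_of_real (\<sigma> * c) * \<psi> n))\<^sup>2"
    unfolding l2norm_add_scaleR_power2[OF assms(1,2)] using \<sigma>(1)
    by (auto simp: power_mult_distrib algebra_simps)
  finally have "c * l2norm \<psi> \<le> l2norm (\<lambda>n. a n + complex_of_real (\<sigma> * c) * \<psi> n)"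
    by (rule power2_le_imp_le) (rule l2norm_nonneg)
  with \<sigma>(1) show ?thesis by (rule that)
qed

lemma symmetric_near_minimizer:
  assumes lin: "linear_on_l2 S"
    and S: "\<And>\<psi>. \<psi> \<in> l2 \<Longrightarrow> S \<psi> \<in> l2 \<and> l2norm (S \<psi>) \<le> s\<^sub>0 * l2norm \<psi>" and s\<^sub>0: "s\<^sub>0 > 0"
    and symm: "\<And>a b. a \<in> l2 \<Longrightarrow> b \<in> l2 \<Longrightarrow> l2_inner (S a) b = l2_inner a (S b)"
    and c: "c > 0" and lower: "\<And>u. u \<in> l2 \<Longrightarrow> c * l2norm u \<le> l2norm (S u)"
    and near: "\<And>h. h > 0 \<Longrightarrow> \<exists>\<psi>\<in>l2. \<psi> \<noteq> (\<lambda>n. 0) \<and> l2norm (S \<psi>) \<le> (c + h) * l2norm \<psi>"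
    and \<eta>: "\<eta> > 0"
  shows "\<exists>\<psi>\<in>l2. \<psi> \<noteq> (\<lambda>n. 0) \<and>
    l2norm (\<lambda>n. S (S \<psi>) n - complex_of_real (c\<^sup>2) * \<psi> n) \<le> \<eta> * c * l2norm \<psi>"
proof -
  have Y: "s\<^sub>0\<^sup>2 * (2 * c + 1) > 0" using s\<^sub>0 c by simp
  define h where "h = min 1 ((\<eta> * c)\<^sup>2 / (s\<^sub>0\<^sup>2 * (2 * c + 1)))"
  have h: "0 < h" "h \<le> 1" unfolding h_def using \<eta> c Y by simp_all
  have "h \<le> (\<eta> * c)\<^sup>2 / (s\<^sub>0\<^sup>2 * (2 * c + 1))" unfolding h_def by simp
  hence h_small: "s\<^sub>0\<^sup>2 * (2 * c + 1) * h \<le> (\<eta> * c)\<^sup>2"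
    unfolding pos_le_divide_eq[OF Y] by (simp only: mult.commute)
  obtain \<psi> where \<psi>: "\<psi> \<in> l2" "\<psi> \<noteq> (\<lambda>n. 0)" "l2norm (S \<psi>) \<le> (c + h) * l2norm \<psi>"
    using near[OF h(1)] by blast
  define N where "N = l2norm \<psi>"
  have N: "N > 0" unfolding N_def using l2norm_pos[OF \<psi>(1,2)] .
  have "(l2norm (S \<psi>))\<^sup>2 \<le> ((c + h) * N)\<^sup>2"
    using \<psi>(3) l2norm_nonneg[of "S \<psi>"] unfolding N_def by (intro power_mono) auto
  also have "\<dots> = c\<^sup>2 * N\<^sup>2 + 2 * c * h * N\<^sup>2 + h\<^sup>2 * N\<^sup>2" by (simp add: power2_eq_square algebra_simps)
  also have "h\<^sup>2 * N\<^sup>2 \<le> h * N\<^sup>2"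
    using h by (intro mult_right_mono) (simp_all add: power2_eq_square mult_le_cancel_left1)
  finally have "(l2norm (S \<psi>))\<^sup>2 - c\<^sup>2 * N\<^sup>2 \<le> (2 * c + 1) * h * N\<^sup>2" by (simp add: algebra_simps)
  hence "s\<^sub>0\<^sup>2 * ((l2norm (S \<psi>))\<^sup>2 - c\<^sup>2 * N\<^sup>2) \<le> s\<^sub>0\<^sup>2 * ((2 * c + 1) * h * N\<^sup>2)"
    by (rule mult_left_mono) simp
  hence "(l2norm (\<lambda>n. S (S \<psi>) n - complex_of_real (c\<^sup>2) * \<psi> n))\<^sup>2 \<le> (s\<^sub>0\<^sup>2 * (2 * c + 1) * h) * N\<^sup>2"
    using symmetric_square_defect_le[OF lin S symm s\<^sub>0 lower less_imp_le[OF c] \<psi>(1)]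
    unfolding N_def by (simp add: mult.assoc)
  also have "\<dots> \<le> (\<eta> * c * N)\<^sup>2" using h_small by (simp add: power_mult_distrib mult_right_mono)
  finally have "l2norm (\<lambda>n. S (S \<psi>) n - complex_of_real (c\<^sup>2) * \<psi> n) \<le> \<eta> * c * N"
    by (rule power2_le_imp_le) (use \<eta> c N in simp)
  thus ?thesis using \<psi>(1,2) unfolding N_def by blast
qed

text \<open>\<open>S\<^sup>2 - c\<^sup>2 = (S - c)(S + c)\<close>, so if \<open>S\<^sup>2 - c\<^sup>2\<close> is almost singular, so is one of the factors.\<close>

lemma symmetric_approx_null_plus_or_minus:
  assumes lin: "linear_on_l2 S"
    and S: "\<And>\<psi>. \<psi> \<in> l2 \<Longrightarrow> S \<psi> \<in> l2 \<and> l2norm (S \<psi>) \<le> s\<^sub>0 * l2norm \<psi>" and s\<^sub>0: "s\<^sub>0 > 0"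
    and symm: "\<And>a b. a \<in> l2 \<Longrightarrow> b \<in> l2 \<Longrightarrow> l2_inner (S a) b = l2_inner a (S b)"
    and c: "c > 0" and lower: "\<And>u. u \<in> l2 \<Longrightarrow> c * l2norm u \<le> l2norm (S u)"
    and near: "\<And>h. h > 0 \<Longrightarrow> \<exists>\<psi>\<in>l2. \<psi> \<noteq> (\<lambda>n. 0) \<and> l2norm (S \<psi>) \<le> (c + h) * l2norm \<psi>"
    and \<eta>: "\<eta> > 0"
  shows "\<exists>\<sigma>\<in>{-1, 1::real}. \<exists>\<xi>\<in>l2. \<xi> \<noteq> (\<lambda>n. 0) \<and>
    (\<lambda>n. S \<xi> n - complex_of_real (\<sigma> * c) * \<xi> n) \<in> l2 \<and>
    l2norm (\<lambda>n. S \<xi> n - complex_of_real (\<sigma> * c) * \<xi> n) \<le> \<eta> * l2norm \<xi>"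
proof -
  obtain \<psi> where \<psi>: "\<psi> \<in> l2" "\<psi> \<noteq> (\<lambda>n. 0)"
    and \<phi>_small: "l2norm (\<lambda>n. S (S \<psi>) n - complex_of_real (c\<^sup>2) * \<psi> n) \<le> \<eta> * c * l2norm \<psi>"
    using symmetric_near_minimizer[OF lin S s\<^sub>0 symm c lower near \<eta>] by blast
  have S\<psi>: "S \<psi> \<in> l2" using S[OF \<psi>(1)] by blast
  obtain \<sigma> :: real where \<sigma>: "\<sigma> \<in> {-1, 1}"
    and \<xi>_large: "c * l2norm \<psi> \<le> l2norm (\<lambda>n. S \<psi> n + complex_of_real (\<sigma> * c) * \<psi> n)"
    using plus_or_minus_lower_bound[OF S\<psi> \<psi>(1) less_imp_le[OF c]] by blast
  define \<xi> where "\<xi> = (\<lambda>n. S \<psi> n + complex_of_real (\<sigma> * c) * \<psi> n)"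
  have \<xi>: "\<xi> \<in> l2" unfolding \<xi>_def by (rule l2_lin_comb[OF S\<psi> \<psi>(1)])
  have "0 < c * l2norm \<psi>" using c l2norm_pos[OF \<psi>] by simp
  hence "\<xi> \<noteq> (\<lambda>n. 0)" using \<xi>_large l2norm_eq_0_iff[OF \<xi>] unfolding \<xi>_def[symmetric] by auto
  moreover have factor: "(\<lambda>n. S \<xi> n - complex_of_real (\<sigma> * c) * \<xi> n)
      = (\<lambda>n. S (S \<psi>) n - complex_of_real (c\<^sup>2) * \<psi> n)"
  proof
    fix n
    define w where "w = complex_of_real (\<sigma> * c)"
    have "(\<sigma> * c) * (\<sigma> * c) = c\<^sup>2" using \<sigma> by (auto simp: power2_eq_square)
    hence sq: "w * w = complex_of_real (c\<^sup>2)" unfolding w_def by (metis of_real_mult)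
    have S\<xi>: "S \<xi> = (\<lambda>n. S (S \<psi>) n + w * S \<psi> n)"
      unfolding \<xi>_def w_def using lin S\<psi> \<psi>(1) unfolding linear_on_l2_def by blast
    have "S \<xi> n - w * \<xi> n = S (S \<psi>) n - w * w * \<psi> n"
      unfolding S\<xi> unfolding \<xi>_def w_def[symmetric] by (simp add: algebra_simps)
    also have "\<dots> = S (S \<psi>) n - complex_of_real (c\<^sup>2) * \<psi> n" unfolding sq ..
    finally show "S \<xi> n - complex_of_real (\<sigma> * c) * \<xi> n = S (S \<psi>) n - complex_of_real (c\<^sup>2) * \<psi> n"
      unfolding w_def .
  qed
  moreover have "\<eta> * (c * l2norm \<psi>) \<le> \<eta> * l2norm \<xi>"
    using \<xi>_large \<eta> unfolding \<xi>_def by (intro mult_left_mono) auto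
  moreover have "(\<lambda>n. S \<xi> n - complex_of_real (\<sigma> * c) * \<xi> n) \<in> l2"
    using l2_diff[OF conjunct1[OF S[OF \<xi>]] l2_scale[OF \<xi>]] .
  ultimately show ?thesis using \<sigma> \<xi> \<phi>_small by (intro bexI[OF _ \<sigma>] bexI[OF _ \<xi>]) (auto simp: mult.assoc)
qed

lemma approx_eigenvalue_near:
  assumes lin: "linear_on_l2 S"
    and S: "\<And>\<psi>. \<psi> \<in> l2 \<Longrightarrow> S \<psi> \<in> l2 \<and> l2norm (S \<psi>) \<le> s\<^sub>0 * l2norm \<psi>" and s\<^sub>0: "s\<^sub>0 > 0"
    and symm: "\<And>a b. a \<in> l2 \<Longrightarrow> b \<in> l2 \<Longrightarrow> l2_inner (S a) b = l2_inner a (S b)"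
    and \<psi>\<^sub>0: "\<psi>\<^sub>0 \<in> l2" "\<psi>\<^sub>0 \<noteq> (\<lambda>n. 0)" "l2norm (S \<psi>\<^sub>0) \<le> \<eta> * l2norm \<psi>\<^sub>0"
  shows "\<exists>w. \<bar>w\<bar> \<le> \<eta> \<and> approx_null (\<lambda>\<psi> n. S \<psi> n - complex_of_real w * \<psi> n)"
proof -
  obtain c where c: "0 \<le> c" "c \<le> \<eta>" and lower: "\<And>u. u \<in> l2 \<Longrightarrow> c * l2norm u \<le> l2norm (S u)"
    and near: "\<And>h. h > 0 \<Longrightarrow> \<exists>\<psi>\<in>l2. \<psi> \<noteq> (\<lambda>n. 0) \<and> l2norm (S \<psi>) \<le> (c + h) * l2norm \<psi>"
    using best_lower_bound[where S=S, OF \<psi>\<^sub>0] by blast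
  define P where "P \<sigma> \<eta>' \<longleftrightarrow> (\<exists>\<xi>\<in>l2. \<xi> \<noteq> (\<lambda>n. 0) \<and>
      (\<lambda>n. S \<xi> n - complex_of_real (\<sigma> * c) * \<xi> n) \<in> l2 \<and>
      l2norm (\<lambda>n. S \<xi> n - complex_of_real (\<sigma> * c) * \<xi> n) \<le> \<eta>' * l2norm \<xi>)" for \<sigma> \<eta>'
  have either: "P 1 \<eta>' \<or> P (-1) \<eta>'" if \<eta>': "\<eta>' > 0" for \<eta>'
  proof (cases "c = 0")
    case True
    then obtain \<psi> where \<psi>: "\<psi> \<in> l2" "\<psi> \<noteq> (\<lambda>n. 0)" "l2norm (S \<psi>) \<le> \<eta>' * l2norm \<psi>"
      using near[OF \<eta>'] by auto
    have "P 1 \<eta>'" unfolding P_def using \<psi> S[OF \<psi>(1)] True by (intro bexI[of _ \<psi>]) simp_all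
    thus ?thesis ..
  next
    case False
    with c have "c > 0" by simp
    from symmetric_approx_null_plus_or_minus[OF lin S s\<^sub>0 symm this lower near \<eta>']
    show ?thesis unfolding P_def by blast
  qed
  have mono: "P \<sigma> b" if "P \<sigma> a" "a \<le> b" for \<sigma> a b
    using that unfolding P_def by (meson l2norm_nonneg mult_right_mono order_trans)
  have "(\<forall>\<eta>'>0. P 1 \<eta>') \<or> (\<forall>\<eta>'>0. P (-1) \<eta>')"
  proof (rule ccontr)
    assume "\<not> ?thesis"
    then obtain a b where a: "a > 0" "\<not> P 1 a" and b: "b > 0" "\<not> P (-1) b" by auto
    have "P 1 (min a b) \<or> P (-1) (min a b)" using either a b by simp
    thus False using mono[of 1 "min a b" a] mono[of "-1" "min a b" b] a b by auto
  qed
  then obtain \<sigma> :: real where \<sigma>: "\<sigma> \<in> {-1, 1}" "\<forall>\<eta>'>0. P \<sigma> \<eta>'" by blast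
  have "approx_null (\<lambda>\<psi> n. S \<psi> n - complex_of_real (\<sigma> * c) * \<psi> n)"
    using \<sigma>(2) unfolding approx_null_def P_def .
  moreover have "\<bar>\<sigma> * c\<bar> \<le> \<eta>" using \<sigma>(1) c by auto
  ultimately show ?thesis by blast
qed

lemma Sp_near_approx_eigenvector:
  assumes V: "\<And>n. \<bar>V n\<bar> \<le> B"
    and \<psi>: "\<psi> \<in> l2" "\<psi> \<noteq> (\<lambda>n. 0)" "l2norm (schrod_minus V E \<psi>) \<le> \<eta> * l2norm \<psi>"
  shows "\<exists>w\<in>Sp V. \<bar>w - E\<bar> \<le> \<eta>"
proof -
  have "2 + B + \<bar>E\<bar> > 0" using V[of 0] by simp
  then obtain w where w: "\<bar>w\<bar> \<le> \<eta>"
    and "approx_null (\<lambda>\<psi> n. schrod_minus V E \<psi> n - complex_of_real w * \<psi> n)"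
    using approx_eigenvalue_near[OF linear_on_l2_schrod_minus _ _ l2_inner_schrod_minus[where V=V, OF V] \<psi>]
      schrod_minus_l2[where V=V, OF V] by blast
  moreover have "(\<lambda>\<psi> n. schrod_minus V E \<psi> n - complex_of_real w * \<psi> n) = schrod_minus V (E + w)"
    by (auto simp: fun_eq_iff schrod_minus_apply algebra_simps)
  ultimately have "E + w \<in> Sp V" using approx_null_imp_Sp by metis
  thus ?thesis using w by (intro bexI[of _ "E + w"]) auto
qed

section \<open>Single-site wells\<close>

text \<open>For \<open>x > 2\<close>, \<open>\<mu> = well_decay x\<close> is the root of \<open>\<mu>\<^sup>2 + x \<mu> + 1 = 0\<close> in \<open>(-1, 0)\<close>. Hence
  \<open>\<mu>\<^bsup>|n - p|\<^esup>\<close> solves \<open>\<psi>(n - 1) + \<psi>(n + 1) + x \<psi>(n) = 0\<close> except at \<open>n = p\<close>, where the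
  left-hand side is \<open>well_depth x\<close> (lemma \<open>well_decay_recurrence\<close>). So the potential \<open>4\<close>
  lowered by \<open>well_depth x\<close> at the single site \<open>p\<close> has the eigenvalue \<open>4 - x\<close>.\<close>

definition well_depth :: "real \<Rightarrow> real" where
  "well_depth x = sqrt (x\<^sup>2 - 4)"

definition well_decay :: "real \<Rightarrow> real" where
  "well_decay x = (well_depth x - x) / 2"

lemma well_depth_power2:
  assumes "x \<ge> 2"
  shows "(well_depth x)\<^sup>2 = x\<^sup>2 - 4"
proof -
  have "2\<^sup>2 \<le> x\<^sup>2" using power_mono[OF assms, of 2] by simp
  thus ?thesis unfolding well_depth_def by simp
qed

lemma well_depth_nonneg: "x \<ge> 2 \<Longrightarrow> 0 \<le> well_depth x"
  unfolding well_depth_def using power_mono[of 2 x 2] by simp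

lemma well_depth_less:
  assumes "x \<ge> 2"
  shows "well_depth x < x"
proof -
  have "(well_depth x)\<^sup>2 < x\<^sup>2" using well_depth_power2[OF assms] by simp
  thus ?thesis by (rule power_less_imp_less_base) (use assms in simp)
qed

lemma well_depth_le_4:
  assumes "0 \<le> e" "e < 2"
  shows "well_depth (4 - e) \<le> 4"
proof -
  have "e * e \<le> 2 * e" using assms by (intro mult_right_mono) auto
  hence "(4 - e)\<^sup>2 - 4 \<le> 4\<^sup>2" using assms by (simp add: power2_eq_square algebra_simps)
  thus ?thesis unfolding well_depth_def by (metis real_sqrt_le_mono real_sqrt_abs abs_numeral)
qed

lemma abs_diff_le_well_depth_diff:
  assumes "x \<ge> 2" "y \<ge> 2" "well_depth x + well_depth y > 0"
  shows "\<bar>x - y\<bar> \<le> \<bar>well_depth x - well_depth y\<bar>"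
proof -
  have "(well_depth x - well_depth y) * (well_depth x + well_depth y) = (x - y) * (x + y)"
    using well_depth_power2[OF assms(1)] well_depth_power2[OF assms(2)]
    by (simp add: power2_eq_square algebra_simps)
  hence "\<bar>well_depth x - well_depth y\<bar> * \<bar>well_depth x + well_depth y\<bar> = \<bar>x - y\<bar> * \<bar>x + y\<bar>"
    by (simp flip: abs_mult)
  hence "\<bar>well_depth x - well_depth y\<bar> * (well_depth x + well_depth y) = \<bar>x - y\<bar> * (x + y)"
    using assms well_depth_nonneg[OF assms(1)] well_depth_nonneg[OF assms(2)] by simp
  moreover have "\<bar>x - y\<bar> * (well_depth x + well_depth y) \<le> \<bar>x - y\<bar> * (x + y)"
    using well_depth_less[OF assms(1)] well_depth_less[OF assms(2)] by (intro mult_left_mono) auto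
  ultimately show ?thesis using assms(3) by (metis mult_le_cancel_right_pos)
qed

lemma well_decay_quadratic: "x \<ge> 2 \<Longrightarrow> (well_decay x)\<^sup>2 + x * well_decay x + 1 = 0"
  unfolding well_decay_def using well_depth_power2[of x] by (simp add: power2_eq_square field_simps)

lemma abs_well_decay: 
  assumes "x > 2"
  shows "\<bar>well_decay x\<bar> = 2 / (x + well_depth x)"
proof -
  have "(x - well_depth x) * (x + well_depth x) = 4"
    using well_depth_power2[of x] assms by (simp add: power2_eq_square algebra_simps)
  moreover have "x - well_depth x > 0" "x + well_depth x > 0"
    using well_depth_less[of x] well_depth_nonneg[of x] assms by auto
  ultimately show ?thesis unfolding well_decay_def by (simp add: field_simps abs_if)
qed

lemma abs_well_decay_le: "x > 2 \<Longrightarrow> \<bar>well_decay x\<bar> \<le> 2 / x"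
  using abs_well_decay[of x] well_depth_nonneg[of x] by (simp add: frac_le)

lemma abs_well_decay_less_1: "x > 2 \<Longrightarrow> \<bar>well_decay x\<bar> < 1"
  using abs_well_decay_le[of x] by (smt (verit) divide_less_eq_1_pos)

lemma well_decay_recurrence:
  assumes "x \<ge> 2"
  shows "well_decay x ^ nat \<bar>d - 1\<bar> + well_decay x ^ nat \<bar>d + 1\<bar> + x * well_decay x ^ nat \<bar>d\<bar>
    = (if d = 0 then well_depth x else 0)"
proof -
  define \<mu> where "\<mu> = well_decay x"
  have step: "\<mu> ^ (k + 1) + \<mu> ^ (k - 1) + x * \<mu> ^ k = 0" if k1: "k \<ge> 1" for k
  proof -
    obtain m where k: "k = Suc m" using k1 by (cases k) auto
    have "\<mu> ^ (k + 1) + \<mu> ^ (k - 1) + x * \<mu> ^ k = \<mu> ^ m * (\<mu>\<^sup>2 + x * \<mu> + 1)"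
      unfolding k by (simp add: power2_eq_square algebra_simps)
    thus ?thesis using well_decay_quadratic[OF assms] unfolding \<mu>_def by simp
  qed
  consider "d = 0" | "d > 0" | "d < 0" by linarith
  thus ?thesis
  proof cases
    case 1 thus ?thesis unfolding well_decay_def by simp
  next
    case 2
    hence "nat \<bar>d - 1\<bar> = nat d - 1" "nat \<bar>d + 1\<bar> = nat d + 1" "nat \<bar>d\<bar> = nat d" by auto
    thus ?thesis using step[of "nat d"] 2 unfolding \<mu>_def by (simp add: add.commute)
  next
    case 3
    hence "nat \<bar>d - 1\<bar> = nat (- d) + 1" "nat \<bar>d + 1\<bar> = nat (- d) - 1" "nat \<bar>d\<bar> = nat (- d)" by auto
    thus ?thesis using step[of "nat (- d)"] 3 unfolding \<mu>_def by simp
  qed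
qed

lemma sum_power2_power_abs_diff_le:
  fixes \<rho> :: real
  assumes "\<bar>\<rho>\<bar> < 1" "finite F"
  shows "(\<Sum>n\<in>F. (\<rho> ^ nat \<bar>n - p\<bar>)\<^sup>2) \<le> 2 / (1 - \<rho>\<^sup>2)"
proof -
  define q where "q = \<rho>\<^sup>2"
  have q: "0 \<le> q" "q < 1" unfolding q_def using assms(1) by (auto simp: abs_square_less_1)
  have half: "(\<Sum>n\<in>A. q ^ nat \<bar>n - p\<bar>) \<le> 1 / (1 - q)"
    if A: "A \<subseteq> F" "inj_on (\<lambda>n. nat \<bar>n - p\<bar>) A" for A
  proof -
    have "(\<Sum>n\<in>A. q ^ nat \<bar>n - p\<bar>) = (\<Sum>k\<in>(\<lambda>n. nat \<bar>n - p\<bar>) ` A. q ^ k)"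
      by (simp add: sum.reindex[OF A(2)])
    also have "\<dots> \<le> (\<Sum>k. q ^ k)"
      using finite_subset[OF A(1) assms(2)] q by (intro sum_le_suminf summable_geometric) auto
    finally show ?thesis using suminf_geometric[of q] q by simp
  qed
  have "(\<Sum>n\<in>F. (\<rho> ^ nat \<bar>n - p\<bar>)\<^sup>2) = (\<Sum>n\<in>F. q ^ nat \<bar>n - p\<bar>)"
    unfolding q_def by (simp add: power_mult[symmetric] mult.commute)
  also have "\<dots> = (\<Sum>n\<in>{n\<in>F. p \<le> n}. q ^ nat \<bar>n - p\<bar>) + (\<Sum>n\<in>{n\<in>F. \<not> p \<le> n}. q ^ nat \<bar>n - p\<bar>)"
    using assms(2) by (subst sum.union_disjoint[symmetric]) (auto intro: sum.cong)
  also have "\<dots> \<le> 1 / (1 - q) + 1 / (1 - q)" by (intro add_mono half) (auto simp: inj_on_def)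
  finally show ?thesis unfolding q_def by simp
qed

lemma l2_bdd_geometric:
  assumes "\<bar>\<rho>\<bar> < 1" "s > 0"
  shows "l2_bdd (\<lambda>n. complex_of_real (\<rho> ^ nat \<bar>n - p\<bar> / s)) (sqrt (2 / (1 - \<rho>\<^sup>2)) / s)"
  unfolding l2_bdd_def
proof (intro allI impI)
  fix F :: "int set" assume F: "finite F"
  have "L2_set (\<lambda>n. cmod (complex_of_real (\<rho> ^ nat \<bar>n - p\<bar> / s))) F
      = L2_set (\<lambda>n. (1/s) * \<bar>\<rho> ^ nat \<bar>n - p\<bar>\<bar>) F"
    by (rule L2_set_cong) (use assms(2) in \<open>auto simp: norm_divide norm_power power_abs\<close>)
  also have "\<dots> = (1/s) * L2_set (\<lambda>n. \<bar>\<rho> ^ nat \<bar>n - p\<bar>\<bar>) F"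
    using L2_set_right_distrib[of "1/s" "\<lambda>n. \<bar>\<rho> ^ nat \<bar>n - p\<bar>\<bar>" F] assms(2) by simp
  also have "L2_set (\<lambda>n. \<bar>\<rho> ^ nat \<bar>n - p\<bar>\<bar>) F \<le> sqrt (2 / (1 - \<rho>\<^sup>2))"
    unfolding L2_set_def using sum_power2_power_abs_diff_le[OF assms(1) F, of p]
    by (simp add: real_sqrt_le_mono)
  finally show "L2_set (\<lambda>n. cmod (complex_of_real (\<rho> ^ nat \<bar>n - p\<bar> / s))) F \<le> sqrt (2 / (1 - \<rho>\<^sup>2)) / s"
    using assms(2) by (simp add: divide_right_mono)
qed

text \<open>The depth of the well at the site \<open>l j\<close> makes \<open>E j\<close> the eigenvalue of that well in
  isolation.\<close>

definition wells :: "nat \<Rightarrow> nat \<Rightarrow> (nat \<Rightarrow> real) \<Rightarrow> int \<Rightarrow> real" where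
  "wells l J E n = (if 0 \<le> n \<and> n mod int l = 0 \<and> n div int l \<le> int J
                    then 4 - well_depth (4 - E (nat (n div int l))) else 4)"

definition admissible_levels :: "nat \<Rightarrow> (nat \<Rightarrow> real) \<Rightarrow> bool" where
  "admissible_levels J E \<longleftrightarrow> (\<forall>j\<le>J. 0 \<le> E j \<and> E j < 2)"

lemma wells_range:
  assumes "admissible_levels J E"
  shows "0 \<le> wells l J E n" "wells l J E n \<le> 4"
proof -
  have "0 \<le> well_depth (4 - E j) \<and> well_depth (4 - E j) \<le> 4" if "j \<le> J" for j
    using assms that well_depth_nonneg[of "4 - E j"] well_depth_le_4[of "E j"]
    unfolding admissible_levels_def by auto
  from this[of "nat (n div int l)"] show "0 \<le> wells l J E n" "wells l J E n \<le> 4"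
    unfolding wells_def by (auto simp: nat_le_iff)
qed

lemma abs_wells_le: "admissible_levels J E \<Longrightarrow> \<bar>wells l J E n\<bar> \<le> 4"
  using wells_range[of J E l n] by simp

lemma wells_at_site: "l \<ge> 1 \<Longrightarrow> j \<le> J \<Longrightarrow> wells l J E (int l * int j) = 4 - well_depth (4 - E j)"
  unfolding wells_def by simp

lemma wells_between_sites:
  assumes "0 < \<bar>d\<bar>" "\<bar>d\<bar> < int l"
  shows "wells l J E (int l * int j + d) = 4"
proof -
  have "\<not> int l dvd \<bar>d\<bar>" using assms zdvd_imp_le[of "int l" "\<bar>d\<bar>"] by auto
  hence "\<not> int l dvd d" by simp
  hence "(int l * int j + d) mod int l \<noteq> 0" by (simp add: mod_eq_0_iff_dvd)
  thus ?thesis unfolding wells_def by auto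
qed

lemma wells_negative: "n < 0 \<Longrightarrow> wells l J E n = 4"
  unfolding wells_def by simp

lemma not_in_Sp_wells_above:
  assumes "admissible_levels J E" "z > 6"
  shows "z \<notin> Sp (wells l J E)"
proof -
  have "z - 4 \<le> \<bar>wells l J E n - z\<bar>" for n
    using abs_ge_minus_self[of "wells l J E n - z"] wells_range(2)[OF assms(1), of l n] by linarith
  hence "l2_invertible (schrod_minus (wells l J E) z)"
    using assms(2) by (intro schrod_minus_invertible_if_far[OF abs_wells_le[OF assms(1)], of "z - 4"]) auto
  thus ?thesis unfolding Sp_eq by simp
qed

lemma Sp_wells_essential:
  assumes "admissible_levels J E" "2 \<le> z" "z \<le> 6"
  shows "z \<in> Sp (wells l J E)"
proof (rule Sp_if_long_plateaus[where c=4, OF abs_wells_le[OF assms(1)]])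
  show "\<exists>a. \<forall>n. a \<le> n \<and> n \<le> a + int L \<longrightarrow> wells l J E n = 4" for L
    by (rule exI[where x="- int L - 1"]) (auto simp: wells_negative)
qed (use assms in auto)

text \<open>The eigenvector \<open>\<mu>\<^bsup>|n - l j|\<^esup>\<close> of the isolated well, truncated to \<open>|n - l j| \<le> L\<close>, is an
  approximate eigenvector of the full operator with defect \<open>O(|\<mu>|\<^bsup>L - 1\<^esup>)\<close>.\<close>

lemma Sp_near_well_level:
  assumes E: "admissible_levels J E" and lL: "L + 2 \<le> l" and L: "1 \<le> L" and j: "j \<le> J"
  shows "\<exists>w\<in>Sp (wells l J E). \<bar>w - E j\<bar> \<le> 12 * \<bar>well_decay (4 - E j)\<bar> ^ (L - 1)"
proof -
  define x where "x = 4 - E j"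
  have x: "x > 2" unfolding x_def using E j unfolding admissible_levels_def by auto
  define \<mu> where "\<mu> = well_decay x"
  have \<mu>: "\<bar>\<mu>\<bar> < 1" unfolding \<mu>_def by (rule abs_well_decay_less_1[OF x])
  define p where "p = int l * int j"
  define W where "W = wells l J E"
  have W: "W n - E j = x - (if n = p then well_depth x else 0)" if "\<bar>n - p\<bar> < int l" for n
  proof (cases "n = p")
    case True thus ?thesis using lL j unfolding W_def p_def x_def by (simp add: wells_at_site)
  next
    case False
    have "W (int l * int j + (n - p)) = 4"
      unfolding W_def by (rule wells_between_sites) (use False that in auto)
    thus ?thesis using False unfolding p_def x_def by simp
  qed
  define \<psi> where "\<psi> n = (if \<bar>n - p\<bar> \<le> int L then complex_of_real (\<mu> ^ nat \<bar>n - p\<bar>) else 0)" for n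
  have \<psi>_le: "cmod (\<psi> n) \<le> 1" for n
    unfolding \<psi>_def using \<mu> by (auto simp: norm_power intro!: power_le_one)
  have "l2_bdd \<psi> (sqrt (card {p - int L..p + int L}) * 1)"
  proof (rule l2_bdd_finite_support)
    show "\<psi> n = 0" if "n \<notin> {p - int L..p + int L}" for n
      using that unfolding \<psi>_def by (auto simp: abs_le_iff)
  qed (simp_all add: \<psi>_le)
  hence \<psi>: "\<psi> \<in> l2" by (rule l2_bdd_imp_l2)
  have \<psi>_p: "\<psi> p = 1" unfolding \<psi>_def by simp
  hence \<psi>_nz: "\<psi> \<noteq> (\<lambda>n. 0)" by force
  have \<psi>_norm: "1 \<le> l2norm \<psi>" using L2_set_le_l2norm[OF \<psi>, of "{p}"] \<psi>_p by simp
  have \<psi>_tail: "cmod (\<psi> m) \<le> \<bar>\<mu>\<bar> ^ (L - 1)" if "int L - 1 \<le> \<bar>m - p\<bar>" for m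
  proof (cases "\<bar>m - p\<bar> \<le> int L")
    case True
    hence "cmod (\<psi> m) = \<bar>\<mu>\<bar> ^ nat \<bar>m - p\<bar>" unfolding \<psi>_def by (simp add: norm_power)
    also have "\<dots> \<le> \<bar>\<mu>\<bar> ^ (L - 1)" using that \<mu> by (intro power_decreasing) auto
    finally show ?thesis .
  qed (simp add: \<psi>_def)
  define ends where "ends = {p - int L - 1, p - int L, p + int L, p + int L + 1}"
  have defect_0: "schrod_minus W (E j) \<psi> n = 0" if "n \<notin> ends" for n
  proof (cases "\<bar>n - p\<bar> < int L")
    case True
    have "\<psi> (n - 1) + \<psi> (n + 1) + complex_of_real (x - (if n = p then well_depth x else 0)) * \<psi> n
      = complex_of_real (\<mu> ^ nat \<bar>(n - p) - 1\<bar> + \<mu> ^ nat \<bar>(n - p) + 1\<bar> + x * \<mu> ^ nat \<bar>n - p\<bar>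
          - (if n = p then well_depth x else 0))"
      using True unfolding \<psi>_def by (auto simp: algebra_simps)
    also have "\<dots> = 0" unfolding \<mu>_def well_decay_recurrence[OF less_imp_le[OF x]] by simp
    finally show ?thesis unfolding schrod_minus_apply using W[of n] True lL by simp
  next
    case False
    hence "\<bar>n - p\<bar> > int L + 1" using that unfolding ends_def by auto
    thus ?thesis unfolding schrod_minus_apply \<psi>_def by auto
  qed
  have defect_le: "cmod (schrod_minus W (E j) \<psi> n) \<le> 6 * \<bar>\<mu>\<bar> ^ (L - 1)" for n
  proof (cases "n \<in> ends")
    case True
    hence far: "int L \<le> \<bar>n - p\<bar>" unfolding ends_def by auto
    have "0 \<le> E j" "E j < 2" using E j unfolding admissible_levels_def by auto
    hence "\<bar>W n - E j\<bar> \<le> 4" using wells_range[OF E, of l n] unfolding W_def by linarith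
    have "cmod (schrod_minus W (E j) \<psi> n)
        \<le> cmod (\<psi> (n - 1) + \<psi> (n + 1)) + cmod (complex_of_real (W n - E j) * \<psi> n)"
      unfolding schrod_minus_apply by (rule norm_triangle_ineq)
    also have "\<dots> \<le> cmod (\<psi> (n - 1)) + cmod (\<psi> (n + 1)) + 4 * cmod (\<psi> n)"
      unfolding norm_mult norm_of_real
      by (intro add_mono norm_triangle_ineq mult_right_mono \<open>\<bar>W n - E j\<bar> \<le> 4\<close>) simp_all
    also have "\<dots> \<le> \<bar>\<mu>\<bar> ^ (L - 1) + \<bar>\<mu>\<bar> ^ (L - 1) + 4 * \<bar>\<mu>\<bar> ^ (L - 1)"
      using far by (intro add_mono mult_left_mono \<psi>_tail) auto
    finally show ?thesis by simp
  qed (simp add: defect_0)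
  have "card ends \<le> 4" unfolding ends_def by (auto simp: card_insert_if)
  hence "sqrt (card ends) * (6 * \<bar>\<mu>\<bar> ^ (L - 1)) \<le> 2 * (6 * \<bar>\<mu>\<bar> ^ (L - 1))"
    using real_sqrt_le_mono[of "card ends" 4] by (intro mult_right_mono) auto
  also have "\<dots> \<le> 12 * \<bar>\<mu>\<bar> ^ (L - 1) * l2norm \<psi>"
    using \<psi>_norm mult_left_mono[of 1 "l2norm \<psi>" "12 * \<bar>\<mu>\<bar> ^ (L - 1)"] by simp
  finally have "l2norm (schrod_minus W (E j) \<psi>) \<le> 12 * \<bar>\<mu>\<bar> ^ (L - 1) * l2norm \<psi>"
    using l2_bdd_imp_l2(2)[OF l2_bdd_mono[OF l2_bdd_finite_support[of ends, OF _ defect_0 defect_le]]]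
    unfolding ends_def by simp
  from Sp_near_approx_eigenvector[OF abs_wells_le[OF E] \<psi> \<psi>_nz this[unfolded W_def]]
  show ?thesis unfolding \<mu>_def x_def .
qed

lemma well_depth_pos: "x > 2 \<Longrightarrow> 0 < well_depth x"
  using well_depth_power2[of x] well_depth_nonneg[of x] power_strict_mono[of 2 x 2]
  by (cases "well_depth x = 0") auto

lemma schrod_minus_of_real:
  "schrod_minus V z (\<lambda>n. complex_of_real (h n)) n
    = complex_of_real (h (n - 1) + h (n + 1) + (V n - z) * h n)"
  unfolding schrod_minus_apply by simp

lemma schrod_minus_const_green:
  assumes "c - z > 2"
  shows "schrod_minus (\<lambda>_. c) z
      (\<lambda>n. complex_of_real (well_decay (c - z) ^ nat \<bar>n - q\<bar> / well_depth (c - z))) n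
    = (if n = q then 1 else 0)"
proof -
  define \<mu> where "\<mu> = well_decay (c - z)"
  have "\<mu> ^ nat \<bar>(n - q) - 1\<bar> + \<mu> ^ nat \<bar>(n - q) + 1\<bar> + (c - z) * \<mu> ^ nat \<bar>n - q\<bar>
      = (if n - q = 0 then well_depth (c - z) else 0)"
    unfolding \<mu>_def by (rule well_decay_recurrence) (use assms in simp)
  moreover have "(n - q) - 1 = n - 1 - q" "(n - q) + 1 = n + 1 - q" "n - q = 0 \<longleftrightarrow> n = q" by auto
  ultimately have "\<mu> ^ nat \<bar>n - 1 - q\<bar> + \<mu> ^ nat \<bar>n + 1 - q\<bar> + (c - z) * \<mu> ^ nat \<bar>n - q\<bar>
      = (if n = q then well_depth (c - z) else 0)"
    by (simp only:)
  thus ?thesis unfolding schrod_minus_of_real \<mu>_def[symmetric] using well_depth_pos[OF assms]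
    by (simp add: add_divide_distrib[symmetric])
qed

lemma wells_eq_sum:
  assumes "l \<ge> 1"
  shows "wells l J E n
    = 4 - (\<Sum>i\<in>{0..int J}. if n = int l * i then well_depth (4 - E (nat i)) else 0)"
proof (cases "0 \<le> n \<and> n mod int l = 0 \<and> n div int l \<le> int J")
  case True
  hence "n = int l * (n div int l)" "n div int l \<in> {0..int J}"
    using assms by (auto simp: pos_imp_zdiv_nonneg_iff)
  moreover have "n = int l * i \<longleftrightarrow> i = n div int l" for i
    using calculation(1) assms by auto
  ultimately have "(\<Sum>i\<in>{0..int J}. if n = int l * i then well_depth (4 - E (nat i)) else 0)
      = well_depth (4 - E (nat (n div int l)))"
    by simp
  thus ?thesis using True unfolding wells_def by simp
next
  case False
  have "n \<noteq> int l * i" if "i \<in> {0..int J}" for i using False that assms by auto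
  hence "(\<Sum>i\<in>{0..int J}. if n = int l * i then well_depth (4 - E (nat i)) else 0) = 0"
    by (intro sum.neutral) auto
  thus ?thesis unfolding wells_def if_not_P[OF False] by simp
qed

lemma sum_cmod_le_l2norm:
  assumes "finite I" "c \<in> l2"
  shows "(\<Sum>j\<in>I. cmod (c j)) \<le> sqrt (card I) * l2norm c"
proof -
  have "(\<Sum>j\<in>I. cmod (c j)) = (\<Sum>j\<in>I. \<bar>cmod (c j)\<bar> * \<bar>1\<bar>)" by simp
  also have "\<dots> \<le> L2_set (\<lambda>j. cmod (c j)) I * L2_set (\<lambda>j. 1) I" by (rule L2_set_mult_ineq)
  also have "\<dots> \<le> l2norm c * sqrt (card I)"
    using L2_set_le_l2norm[OF assms(2,1)] by (simp add: L2_set_constant mult_right_mono)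
  finally show ?thesis by (simp add: mult.commute)
qed

lemma l2_bdd_coupling:
  assumes "finite I" "c \<in> l2" "0 \<le> A" "0 \<le> \<kappa>"
    and a: "\<And>i. i \<in> I \<Longrightarrow> cmod (a i) \<le> A" and k: "\<And>i j. i \<in> I \<Longrightarrow> j \<in> I \<Longrightarrow> i \<noteq> j \<Longrightarrow> cmod (k i j) \<le> \<kappa>"
  shows "l2_bdd (\<lambda>i. if i \<in> I then a i * (\<Sum>j\<in>I - {i}. k i j * c j) else 0)
    (real (card I) * A * \<kappa> * l2norm c)"
proof -
  note sum_c = sum_cmod_le_l2norm[OF assms(1,2)]
  have "cmod (a i * (\<Sum>j\<in>I - {i}. k i j * c j)) \<le> A * (\<kappa> * (sqrt (card I) * l2norm c))"
    if i: "i \<in> I" for i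
  proof -
    have "cmod (\<Sum>j\<in>I - {i}. k i j * c j) \<le> (\<Sum>j\<in>I - {i}. \<kappa> * cmod (c j))"
      using k[OF i] by (intro order_trans[OF norm_sum] sum_mono) (auto simp: norm_mult mult_right_mono)
    also have "\<dots> \<le> (\<Sum>j\<in>I. \<kappa> * cmod (c j))" using assms(1,4) by (intro sum_mono2) auto
    also have "\<dots> \<le> \<kappa> * (sqrt (card I) * l2norm c)"
      using mult_left_mono[OF sum_c assms(4)] by (simp add: sum_distrib_left)
    finally show ?thesis unfolding norm_mult using a[OF i] assms(3,4)
      by (intro mult_mono) (auto intro!: mult_nonneg_nonneg l2norm_nonneg)
  qed
  hence "l2_bdd (\<lambda>i. if i \<in> I then a i * (\<Sum>j\<in>I - {i}. k i j * c j) else 0)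
      (sqrt (card I) * (A * (\<kappa> * (sqrt (card I) * l2norm c))))"
    using assms(1,3,4) by (intro l2_bdd_finite_support)
      (auto intro!: mult_nonneg_nonneg l2norm_nonneg)
  thus ?thesis by (simp add: mult_ac)
qed

lemma coefficient_equation_iff:
  fixes c r S s t :: "'a::field"
  assumes "s \<noteq> 0" "s \<noteq> t"
  shows "c = t * (r + (c + S) / s) \<longleftrightarrow> c = s * t / (s - t) * r + t / (s - t) * S"
proof -
  have "s - t \<noteq> 0" using assms(2) by simp
  have "c = t * (r + (c + S) / s) \<longleftrightarrow> c * s = t * r * s + t * c + t * S"
    using assms(1) by (auto simp: field_simps)
  also have "\<dots> \<longleftrightarrow> c * (s - t) = s * t * r + t * S" by (auto simp: algebra_simps)
  also have "\<dots> \<longleftrightarrow> c = (s * t * r + t * S) / (s - t)"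
    using \<open>s - t \<noteq> 0\<close> by (simp add: eq_divide_eq)
  also have "\<dots> \<longleftrightarrow> c = s * t / (s - t) * r + t / (s - t) * S"
    by (simp add: add_divide_distrib)
  finally show ?thesis .
qed

lemma schrod_minus_sum:
  "schrod_minus V z (\<lambda>n. \<Sum>j\<in>A. c j * b j n) n = (\<Sum>j\<in>A. c j * schrod_minus V z (b j) n)"
  unfolding schrod_minus_apply by (simp add: distrib_left sum.distrib sum_distrib_left mult_ac)

text \<open>Resolvent of the wells potential at an energy \<open>z\<close> below the band \<open>[2, 6]\<close> and away from
  the levels, by the Krein formula: \<open>A\<^sub>W - z\<close> is the operator \<open>T\<^sub>0\<close> with constant potential \<open>4\<close>,
  inverted by its explicit Green function, minus a perturbation of rank \<open>J + 1\<close>. The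
  coefficients of the Green functions at the sites solve a linear system that is a small
  perturbation of a diagonal one because the sites are \<open>l\<close> apart.\<close>

locale wells_resolvent =
  fixes l J :: nat and E :: "nat \<Rightarrow> real" and z ep :: real
  assumes levels: "admissible_levels J E" and l_pos: "l \<ge> 1" and z_le: "z \<le> 3/2"
    and ep_pos: "0 < ep" and far: "\<And>j. j \<le> J \<Longrightarrow> ep \<le> \<bar>z - E j\<bar>"
    and l_large: "real (J + 1) * (4 / ep) * (1/2)^l \<le> 1/2"
begin

definition sites :: "int set" where "sites = {0..int J}"
definition site :: "int \<Rightarrow> int" where "site i = int l * i"
definition depth :: "int \<Rightarrow> real" where "depth i = well_depth (4 - E (nat i))"
definition s :: real where "s = well_depth (4 - z)"
definition \<mu> :: real where "\<mu> = well_decay (4 - z)"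
definition T\<^sub>0 :: "(int \<Rightarrow> complex) \<Rightarrow> (int \<Rightarrow> complex)" where "T\<^sub>0 = schrod_minus (\<lambda>_. 4) z"
definition green :: "int \<Rightarrow> int \<Rightarrow> complex" where
  "green q n = complex_of_real (\<mu> ^ nat \<bar>n - q\<bar> / s)"
definition superpos :: "(int \<Rightarrow> complex) \<Rightarrow> int \<Rightarrow> complex" where
  "superpos c n = (\<Sum>j\<in>sites. c j * green (site j) n)"
definition coupling :: "(int \<Rightarrow> complex) \<Rightarrow> int \<Rightarrow> complex" where
  "coupling c i = (\<Sum>j\<in>sites - {i}. complex_of_real (\<mu> ^ (l * nat \<bar>i - j\<bar>)) * c j)"
definition coupling_op :: "(int \<Rightarrow> complex) \<Rightarrow> int \<Rightarrow> complex" where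
  "coupling_op c i = (if i \<in> sites then complex_of_real (depth i / (s - depth i)) * coupling c i else 0)"

lemma finite_sites: "finite sites"
  unfolding sites_def by simp

lemma card_sites: "card sites = J + 1"
  unfolding sites_def by simp

lemma s_ge: "s \<ge> 3/2"
proof -
  have "(3/2)\<^sup>2 \<le> (4 - z)\<^sup>2 - 4" using power_mono[of "5/2" "4 - z" 2] z_le by (simp add: power2_eq_square)
  hence "(3/2)\<^sup>2 \<le> s\<^sup>2" unfolding s_def using z_le by (simp add: well_depth_power2)
  thus ?thesis by (rule power2_le_imp_le) (use well_depth_nonneg[of "4 - z"] z_le in \<open>simp add: s_def\<close>)
qed

lemma abs_\<mu>_le: "\<bar>\<mu>\<bar> \<le> 1/2"
proof -
  have "\<bar>\<mu>\<bar> = 2 / ((4 - z) + s)" unfolding \<mu>_def s_def by (rule abs_well_decay) (use z_le in simp)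
  also have "\<dots> \<le> 2 / 4" using z_le s_ge by (intro divide_left_mono) auto
  finally show ?thesis by simp
qed

lemma depth_range:
  assumes "i \<in> sites"
  shows "0 \<le> depth i \<and> depth i \<le> 4"
proof -
  have "0 \<le> E (nat i)" "E (nat i) < 2"
    using levels assms unfolding sites_def admissible_levels_def by (auto simp: nat_le_iff)
  thus ?thesis using well_depth_nonneg[of "4 - E (nat i)"] well_depth_le_4[of "E (nat i)"]
    unfolding depth_def by simp
qed

lemma depth_separated:
  assumes "i \<in> sites"
  shows "ep \<le> \<bar>s - depth i\<bar>"
proof -
  have j: "nat i \<le> J" using assms unfolding sites_def by auto
  hence E: "E (nat i) < 2" using levels unfolding admissible_levels_def by auto
  have "ep \<le> \<bar>(4 - z) - (4 - E (nat i))\<bar>" using far[OF j] by simp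
  also have "\<dots> \<le> \<bar>s - depth i\<bar>" unfolding s_def depth_def
    by (rule abs_diff_le_well_depth_diff) (use z_le E s_ge well_depth_nonneg[of "4 - E (nat i)"] in
      \<open>auto simp: s_def\<close>)
  finally show ?thesis .
qed

lemma T\<^sub>0_green: "T\<^sub>0 (green q) n = (if n = q then 1 else 0)"
  using schrod_minus_const_green[of 4 z q n] z_le unfolding T\<^sub>0_def green_def \<mu>_def s_def by simp

lemma linear_on_l2_T\<^sub>0: "linear_on_l2 T\<^sub>0"
  unfolding T\<^sub>0_def by (rule linear_on_l2_schrod_minus)

lemma T\<^sub>0_invertible: "l2_invertible T\<^sub>0"
  unfolding T\<^sub>0_def by (rule schrod_minus_invertible_if_far[of _ 4 "4 - z"]) (use z_le in auto)

lemma T\<^sub>0_superpos: "T\<^sub>0 (superpos c) n = (\<Sum>i\<in>sites. if n = site i then c i else 0)"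
proof -
  have "T\<^sub>0 (superpos c) n = (\<Sum>j\<in>sites. c j * T\<^sub>0 (green (site j)) n)"
    unfolding T\<^sub>0_def superpos_def[abs_def] by (rule schrod_minus_sum)
  also have "\<dots> = (\<Sum>i\<in>sites. if n = site i then c i else 0)"
    unfolding T\<^sub>0_green by (rule sum.cong) auto
  finally show ?thesis .
qed

lemma superpos_at_site:
  assumes "i \<in> sites"
  shows "superpos c (site i) = (c i + coupling c i) / complex_of_real s"
proof -
  have "superpos c (site i) = c i * green (site i) (site i) + (\<Sum>j\<in>sites - {i}. c j * green (site j) (site i))"
    unfolding superpos_def using assms finite_sites by (simp add: sum.remove)
  also have "(\<Sum>j\<in>sites - {i}. c j * green (site j) (site i)) = coupling c i / complex_of_real s"
  proof -
    have "nat \<bar>site i - site j\<bar> = l * nat \<bar>i - j\<bar>" for j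
    proof -
      have "site i - site j = int l * (i - j)" unfolding site_def by (simp add: algebra_simps)
      thus ?thesis by (simp add: abs_mult nat_mult_distrib)
    qed
    thus ?thesis unfolding coupling_def sum_divide_distrib green_def
      by (intro sum.cong) (simp_all add: mult.commute)
  qed
  finally show ?thesis by (simp add: green_def add_divide_distrib)
qed

lemma l2_bdd_superpos:
  "l2_bdd (superpos c) (\<Sum>j\<in>sites. cmod (c j) * (sqrt (2 / (1 - \<mu>\<^sup>2)) / s))"
proof -
  have "l2_bdd (green q) (sqrt (2 / (1 - \<mu>\<^sup>2)) / s)" for q
    unfolding green_def by (rule l2_bdd_geometric) (use abs_\<mu>_le s_ge in auto)
  thus ?thesis unfolding superpos_def[abs_def]
    by (intro l2_bdd_sum[OF finite_sites] l2_bdd_scale)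
qed

lemma l2_superpos: "superpos c \<in> l2"
  using l2_bdd_imp_l2[OF l2_bdd_superpos] by blast

lemma coupling_op_contraction:
  assumes "c \<in> l2"
  shows "coupling_op c \<in> l2" "l2norm (coupling_op c) \<le> 1/2 * l2norm c"
proof -
  have "cmod (complex_of_real (depth i / (s - depth i))) \<le> 4 / ep" if "i \<in> sites" for i
  proof -
    have "\<bar>depth i / (s - depth i)\<bar> = depth i / \<bar>s - depth i\<bar>"
      using depth_range[OF that] by (simp add: abs_divide)
    also have "\<dots> \<le> 4 / ep"
      using depth_range[OF that] depth_separated[OF that] ep_pos by (intro frac_le) auto
    finally show ?thesis unfolding norm_of_real .
  qed
  moreover have "cmod (complex_of_real (\<mu> ^ (l * nat \<bar>i - j\<bar>))) \<le> (1/2) ^ l" if "i \<noteq> j" for i j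
  proof -
    have "\<bar>\<mu>\<bar> ^ (l * nat \<bar>i - j\<bar>) \<le> \<bar>\<mu>\<bar> ^ l"
      using that abs_\<mu>_le by (intro power_decreasing) auto
    also have "\<dots> \<le> (1/2) ^ l" using abs_\<mu>_le by (intro power_mono) auto
    finally show ?thesis by (simp add: norm_power)
  qed
  ultimately have "l2_bdd (coupling_op c) (real (card sites) * (4 / ep) * (1/2) ^ l * l2norm c)"
    unfolding coupling_op_def[abs_def] coupling_def
    using l2_bdd_coupling[OF finite_sites assms, of "4 / ep" "(1/2) ^ l"] ep_pos by simp
  moreover have "real (card sites) * (4 / ep) * (1/2) ^ l * l2norm c \<le> 1/2 * l2norm c"
    unfolding card_sites using l_large by (intro mult_right_mono l2norm_nonneg)
  ultimately show "coupling_op c \<in> l2" "l2norm (coupling_op c) \<le> 1/2 * l2norm c"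
    using l2_bdd_imp_l2 l2_bdd_mono by blast+
qed

lemma schrod_minus_wells:
  "schrod_minus (wells l J E) z \<psi> n
    = T\<^sub>0 \<psi> n - (\<Sum>i\<in>sites. if n = site i then complex_of_real (depth i) * \<psi> (site i) else 0)"
proof -
  have "(\<Sum>i\<in>sites. if n = site i then complex_of_real (depth i) * \<psi> (site i) else 0)
      = complex_of_real (\<Sum>i\<in>sites. if n = site i then depth i else 0) * \<psi> n"
    unfolding of_real_sum sum_distrib_right by (rule sum.cong) auto
  thus ?thesis unfolding T\<^sub>0_def schrod_minus_apply wells_eq_sum[OF l_pos]
    unfolding sites_def site_def depth_def by (simp add: algebra_simps)
qed

end

context wells_resolvent
begin

lemma schrod_minus_wells_superpos:
  assumes "r \<in> l2"
  shows "schrod_minus (wells l J E) z (\<lambda>n. r n + superpos c n) n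
    = T\<^sub>0 r n + (\<Sum>i\<in>sites. if n = site i
        then c i - complex_of_real (depth i) * (r (site i) + superpos c (site i)) else 0)"
proof -
  have "T\<^sub>0 (\<lambda>n. r n + superpos c n) n = T\<^sub>0 r n + (\<Sum>i\<in>sites. if n = site i then c i else 0)"
    using linear_on_l2_add[OF linear_on_l2_T\<^sub>0 assms l2_superpos] T\<^sub>0_superpos by simp
  thus ?thesis unfolding schrod_minus_wells by (simp add: sum_subtractf[symmetric] if_distrib
        cong: if_cong)
qed

lemma wells_injective:
  assumes u: "u \<in> l2" and "schrod_minus (wells l J E) z u = (\<lambda>n. 0)"
  shows "u = (\<lambda>n. 0)"
proof -
  define c where "c i = (if i \<in> sites then complex_of_real (depth i) * u (site i) else 0)" for i
  have "T\<^sub>0 u = T\<^sub>0 (superpos c)"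
  proof
    fix n
    have "T\<^sub>0 u n = (\<Sum>i\<in>sites. if n = site i then complex_of_real (depth i) * u (site i) else 0)"
      using fun_cong[OF assms(2), of n] unfolding schrod_minus_wells by simp
    also have "\<dots> = (\<Sum>i\<in>sites. if n = site i then c i else 0)"
      unfolding c_def by (rule sum.cong) auto
    finally show "T\<^sub>0 u n = T\<^sub>0 (superpos c) n" unfolding T\<^sub>0_superpos .
  qed
  moreover obtain B where "\<And>\<psi>. \<psi> \<in> l2 \<Longrightarrow> B (T\<^sub>0 \<psi>) = \<psi>"
    using l2_invertibleE[OF T\<^sub>0_invertible] by metis
  ultimately have u_eq: "u = superpos c" using u l2_superpos by metis
  have c_fix: "coupling_op c = c"
  proof
    fix i
    show "coupling_op c i = c i"
    proof (cases "i \<in> sites")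
      case True
      have "c i = complex_of_real (depth i) * (0 + (c i + coupling c i) / complex_of_real s)"
        using True superpos_at_site[OF True, of c] u_eq unfolding c_def by simp
      hence "c i = complex_of_real (depth i) / complex_of_real (s - depth i) * coupling c i"
        using coefficient_equation_iff[of "complex_of_real s" "complex_of_real (depth i)" "c i" 0]
          s_ge depth_separated[OF True] ep_pos by auto
      thus ?thesis using True unfolding coupling_op_def by simp
    qed (simp add: c_def coupling_op_def)
  qed
  have c: "c \<in> l2"
  proof -
    have "l2_bdd c (sqrt (card sites) * (4 * l2norm u))"
    proof (rule l2_bdd_finite_support[OF finite_sites])
      show "cmod (c i) \<le> 4 * l2norm u" for i
      proof (cases "i \<in> sites")
        case True
        hence "cmod (c i) = depth i * cmod (u (site i))"
          using depth_range[OF True] by (simp add: c_def norm_mult)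
        thus ?thesis using depth_range[OF True] l2_bdd_pointwise[OF l2_bdd_l2norm[OF u], of "site i"]
          by (simp add: mult_mono)
      qed (simp add: c_def l2norm_nonneg)
    qed (simp add: c_def)
    thus ?thesis by (rule l2_bdd_imp_l2)
  qed
  have "l2norm c \<le> 1/2 * l2norm c" using coupling_op_contraction(2)[OF c] unfolding c_fix .
  hence "c = (\<lambda>n. 0)" by (rule l2norm_le_contraction_imp_zero[OF c]) simp
  thus ?thesis unfolding u_eq superpos_def by simp
qed

lemma wells_solvable:
  obtains C where "\<And>\<phi>. \<phi> \<in> l2 \<Longrightarrow>
    \<exists>\<psi>\<in>l2. schrod_minus (wells l J E) z \<psi> = \<phi> \<and> l2norm \<psi> \<le> C * l2norm \<phi>"
proof -
  obtain R C\<^sub>0 where C\<^sub>0: "C\<^sub>0 > 0" and R_l2: "\<And>\<psi>. \<psi> \<in> l2 \<Longrightarrow> R \<psi> \<in> l2"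
    and R_norm: "\<And>\<psi>. \<psi> \<in> l2 \<Longrightarrow> l2norm (R \<psi>) \<le> C\<^sub>0 * l2norm \<psi>"
    and T\<^sub>0R: "\<And>\<psi>. \<psi> \<in> l2 \<Longrightarrow> T\<^sub>0 (R \<psi>) = \<psi>"
    using l2_invertibleE[OF T\<^sub>0_invertible] by metis
  define G where "G = sqrt (2 / (1 - \<mu>\<^sup>2)) / s"
  have "\<mu>\<^sup>2 < 1" using abs_\<mu>_le by (simp add: abs_square_less_1)
  hence G: "0 \<le> G" unfolding G_def using s_ge by simp
  define K where "K = 4 * s / ep"
  define \<rho> where "\<rho> i = complex_of_real (s * depth i / (s - depth i))" for i
  have \<rho>: "cmod (\<rho> i) \<le> K" if "i \<in> sites" for i
  proof -
    have "\<bar>s * depth i / (s - depth i)\<bar> = depth i * s / \<bar>s - depth i\<bar>"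
      using depth_range[OF that] s_ge by (simp add: abs_divide abs_mult mult.commute)
    also have "\<dots> \<le> 4 * s / ep" using depth_range[OF that] depth_separated[OF that] ep_pos s_ge
      by (intro frac_le mult_right_mono) auto
    finally show ?thesis unfolding \<rho>_def K_def norm_of_real .
  qed
  define C where "C = C\<^sub>0 + sqrt (real (J + 1)) * (2 * (sqrt (real (J + 1)) * (K * C\<^sub>0))) * G"
  show ?thesis
  proof (rule that[of C])
    fix \<phi> :: "int \<Rightarrow> complex" assume \<phi>: "\<phi> \<in> l2"
    define r where "r = R \<phi>"
    have r: "r \<in> l2" "l2norm r \<le> C\<^sub>0 * l2norm \<phi>" "T\<^sub>0 r = \<phi>"
      unfolding r_def using R_l2 R_norm T\<^sub>0R \<phi> by auto
    define b where "b i = (if i \<in> sites then \<rho> i * r (site i) else 0)" for i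
    have "l2_bdd b (sqrt (card sites) * (K * (C\<^sub>0 * l2norm \<phi>)))"
    proof (rule l2_bdd_finite_support[OF finite_sites])
      show "cmod (b i) \<le> K * (C\<^sub>0 * l2norm \<phi>)" for i
      proof (cases "i \<in> sites")
        case True
        have "cmod (r (site i)) \<le> C\<^sub>0 * l2norm \<phi>"
          using l2_bdd_pointwise[OF l2_bdd_l2norm[OF r(1)], of "site i"] r(2) by linarith
        moreover have "cmod (b i) = cmod (\<rho> i) * cmod (r (site i))"
          using True by (simp add: b_def norm_mult)
        moreover have "0 \<le> K" using \<rho>[OF True] norm_ge_zero order_trans by blast
        ultimately show ?thesis using \<rho>[OF True] by (simp add: mult_mono)
      qed (use s_ge ep_pos C\<^sub>0 l2norm_nonneg[of \<phi>] in \<open>simp add: b_def K_def\<close>)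
    qed (simp add: b_def)
    hence b: "b \<in> l2" "l2norm b \<le> sqrt (real (J + 1)) * (K * (C\<^sub>0 * l2norm \<phi>))"
      using l2_bdd_imp_l2 card_sites by auto
    have lin: "linear_on_l2 coupling_op"
      unfolding linear_on_l2_def coupling_op_def[abs_def] coupling_def
      by (auto simp: fun_eq_iff sum.distrib sum_distrib_left algebra_simps)
    obtain c where c: "c \<in> l2" "(\<lambda>i. c i - coupling_op c i) = b" "l2norm c \<le> l2norm b / (1 - 1/2)"
      using neumann_series_solution[OF lin _ _ _ b(1), of "1/2"] coupling_op_contraction by auto
    define \<psi> where "\<psi> = (\<lambda>n. r n + superpos c n)"
    have "c i = complex_of_real (depth i) * \<psi> (site i)" if i: "i \<in> sites" for i
    proof -
      have "c i = \<rho> i * r (site i) + complex_of_real (depth i / (s - depth i)) * coupling c i"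
        using fun_cong[OF c(2), of i] i unfolding b_def coupling_op_def by (simp add: algebra_simps)
      thus ?thesis unfolding \<psi>_def superpos_at_site[OF i] \<rho>_def
        using coefficient_equation_iff[of "complex_of_real s" "complex_of_real (depth i)" "c i"]
          s_ge depth_separated[OF i] ep_pos by auto
    qed
    hence "schrod_minus (wells l J E) z \<psi> = \<phi>"
      unfolding \<psi>_def using schrod_minus_wells_superpos[OF r(1)] r(3)
      by (auto simp: fun_eq_iff \<psi>_def intro!: sum.neutral)
    moreover have "l2norm \<psi> \<le> C * l2norm \<phi>"
    proof -
      have "l2_bdd \<psi> (l2norm r + (\<Sum>j\<in>sites. cmod (c j)) * G)"
        unfolding \<psi>_def G_def sum_distrib_right
        using l2_bdd_add[OF l2_bdd_l2norm[OF r(1)] l2_bdd_superpos] .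
      hence "l2norm \<psi> \<le> l2norm r + (\<Sum>j\<in>sites. cmod (c j)) * G" by (rule l2_bdd_imp_l2)
      also have "(\<Sum>j\<in>sites. cmod (c j)) \<le> sqrt (real (J + 1)) * l2norm c"
        using sum_cmod_le_l2norm[OF finite_sites c(1)] card_sites by simp
      also have "l2norm c \<le> 2 * (sqrt (real (J + 1)) * (K * (C\<^sub>0 * l2norm \<phi>)))"
        using c(3) b(2) by simp
      also have "l2norm r \<le> C\<^sub>0 * l2norm \<phi>" by (rule r(2))
      finally show ?thesis unfolding C_def using G by (simp add: algebra_simps mult_right_mono)
    qed
    moreover have "\<psi> \<in> l2" unfolding \<psi>_def by (rule l2_add[OF r(1) l2_superpos])
    ultimately show "\<exists>\<psi>\<in>l2. schrod_minus (wells l J E) z \<psi> = \<phi> \<and> l2norm \<psi> \<le> C * l2norm \<phi>" by blast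
  qed
qed

lemma wells_invertible: "l2_invertible (schrod_minus (wells l J E) z)"
proof -
  obtain C where C: "\<And>\<phi>. \<phi> \<in> l2 \<Longrightarrow>
      \<exists>\<psi>\<in>l2. schrod_minus (wells l J E) z \<psi> = \<phi> \<and> l2norm \<psi> \<le> C * l2norm \<phi>"
    using wells_solvable by blast
  show ?thesis
  proof (rule l2_invertibleI[OF linear_on_l2_schrod_minus])
    show "schrod_minus (wells l J E) z \<psi> \<in> l2" if "\<psi> \<in> l2" for \<psi>
      using schrod_minus_l2(1)[where V="wells l J E", OF abs_wells_le[OF levels] that] .
  qed (use wells_injective C in auto)
qed

end

lemma Sp_wells_subset:
  assumes levels: "admissible_levels J E" and l: "l \<ge> 1" and ep: "0 < ep"
    and l_large: "real (J + 1) * (4 / ep) * (1/2)^l \<le> 1/2"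
  shows "Sp (wells l J E) \<subseteq> {3/2..6} \<union> (\<Union>j\<le>J. {E j - ep..E j + ep})"
proof
  fix z assume z: "z \<in> Sp (wells l J E)"
  show "z \<in> {3/2..6} \<union> (\<Union>j\<le>J. {E j - ep..E j + ep})"
  proof (rule ccontr)
    assume "\<not> ?thesis"
    moreover have "z \<le> 6" using not_in_Sp_wells_above[OF levels] z by force
    ultimately have "z \<le> 3/2" and off: "\<And>j. j \<le> J \<Longrightarrow> \<not> (E j - ep \<le> z \<and> z \<le> E j + ep)"
      by auto
    moreover have "ep \<le> \<bar>z - E j\<bar>" if "j \<le> J" for j using off[OF that] by (auto simp: abs_if)
    ultimately have "wells_resolvent l J E z ep" using levels l ep l_large by unfold_locales auto
    hence "l2_invertible (schrod_minus (wells l J E) z)" by (rule wells_resolvent.wells_invertible)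
    thus False using z unfolding Sp_eq by simp
  qed
qed

lemma measure_Sp_wells_le:
  assumes "admissible_levels J E" "l \<ge> 1" "0 < ep" "real (J + 1) * (4 / ep) * (1/2)^l \<le> 1/2"
  shows "measure lebesgue (Sp (wells l J E)) \<le> 9/2 + real (J + 1) * (2 * ep)"
proof -
  define U where "U = {3/2..6::real} \<union> (\<Union>j\<le>J. {E j - ep..E j + ep})"
  have U: "U \<in> fmeasurable lebesgue" unfolding U_def by (intro fmeasurable.Un fmeasurable.finite_UN) auto
  have "measure lebesgue (Sp (wells l J E)) \<le> measure lebesgue U"
    using Sp_wells_subset[OF assms] closed_Sp[OF abs_wells_le[OF assms(1)]] unfolding U_def[symmetric]
    by (intro measure_mono_fmeasurable[OF _ _ U]) (auto simp: borel_closed)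
  also have "\<dots> \<le> measure lebesgue {3/2..6::real} + measure lebesgue (\<Union>j\<le>J. {E j - ep..E j + ep})"
    unfolding U_def by (rule measure_Un_le) auto
  also have "measure lebesgue (\<Union>j\<le>J. {E j - ep..E j + ep}) \<le> (\<Sum>j\<le>J. measure lebesgue {E j - ep..E j + ep})"
    by (rule measure_UNION_le) auto
  finally show ?thesis using assms(3) by simp
qed

section \<open>The impossibility argument\<close>

lemma dH_le:
  assumes "\<And>x. x \<in> X \<Longrightarrow> \<exists>y\<in>Y. dist x y \<le> e" "\<And>y. y \<in> Y \<Longrightarrow> \<exists>x\<in>X. dist x y \<le> e"
  shows "dH X Y \<le> ennreal e"
  unfolding dH_def
proof (intro max.boundedI SUP_least)
  fix x assume "x \<in> X"
  then obtain y where "y \<in> Y" "dist x y \<le> e" using assms(1) by blast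
  thus "(INF y\<in>Y. ennreal (dist x y)) \<le> ennreal e" by (intro INF_lower2 ennreal_leI)
next
  fix y assume "y \<in> Y"
  then obtain x where "x \<in> X" "dist x y \<le> e" using assms(2) by blast
  thus "(INF x\<in>X. ennreal (dist x y)) \<le> ennreal e" by (intro INF_lower2 ennreal_leI)
qed

lemma dense_Sp_wells:
  assumes levels: "admissible_levels J E" and \<epsilon>: "0 < \<epsilon>"
    and E: "\<And>j. E j = real j * \<epsilon> / 2" and J: "real J * \<epsilon> = 4 - 2 * \<epsilon>"
    and near: "\<And>j. j \<le> J \<Longrightarrow> \<exists>w\<in>Sp (wells l J E). \<bar>w - E j\<bar> \<le> \<epsilon> / 4"
    and x: "x \<in> {0..6}"
  shows "\<exists>y\<in>Sp (wells l J E). dist x y \<le> \<epsilon>"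
proof -
  consider "2 \<le> x" | "2 - \<epsilon> \<le> x" "x < 2" | "x < 2 - \<epsilon>" by linarith
  thus ?thesis
  proof cases
    case 1
    hence "x \<in> Sp (wells l J E)" using x by (intro Sp_wells_essential[OF levels]) auto
    thus ?thesis using \<epsilon> by (intro bexI[of _ x]) auto
  next
    case 2
    have "2 \<in> Sp (wells l J E)" by (rule Sp_wells_essential[OF levels]) auto
    thus ?thesis using 2 by (intro bexI[of _ 2]) (auto simp: dist_real_def)
  next
    case 3
    define j where "j = nat \<lfloor>2 * x / \<epsilon>\<rfloor>"
    have "real j = of_int \<lfloor>2 * x / \<epsilon>\<rfloor>" unfolding j_def using x \<epsilon> by simp
    hence j: "real j \<le> 2 * x / \<epsilon>" "2 * x / \<epsilon> < real j + 1" by linarith+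
    hence E_j: "E j \<le> x" "x < E j + \<epsilon> / 2" unfolding E using \<epsilon> by (simp_all add: field_simps)
    have "2 * x / \<epsilon> < real J" using 3 \<epsilon> J by (simp add: field_simps)
    hence "j \<le> J" using j by linarith
    then obtain w where w: "w \<in> Sp (wells l J E)" "\<bar>w - E j\<bar> \<le> \<epsilon> / 4" using near by blast
    have "\<bar>x - w\<bar> \<le> \<epsilon>"
      using abs_le_D1[OF w(2)] abs_le_D2[OF w(2)] E_j \<epsilon> unfolding abs_le_iff by linarith
    thus ?thesis using w(1) by (intro bexI[of _ w]) (auto simp: dist_real_def)
  qed
qed

text \<open>The levels \<open>E j = j \<epsilon>/2\<close> fill \<open>[0, 2 - \<epsilon>]\<close>, so with the band \<open>[2, 6]\<close> the spectrum of the wells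
  potential is \<open>\<epsilon>\<close>-dense in \<open>[0, 6]\<close>, while it is covered by \<open>[3/2, 6]\<close> and \<open>J + 1 \<approx> 4/\<epsilon>\<close>
  intervals of length \<open>\<epsilon>/8\<close>.\<close>

lemma exists_potential_near_step_small_Sp:
  assumes N: "N \<ge> 1"
  shows "\<exists>W. bounded (range W) \<and> dH (Sp step_potential) (Sp W) \<le> ennreal ((1/2) ^ N)
    \<and> measure lebesgue (Sp W) \<le> 5"
proof -
  define \<epsilon> :: real where "\<epsilon> = (1/2) ^ N"
  have \<epsilon>: "0 < \<epsilon>" "\<epsilon> \<le> 1/2" unfolding \<epsilon>_def using power_decreasing[OF N, of "1/2::real"] by auto
  define J :: nat where "J = 2 ^ (N + 2) - 2"
  have J\<epsilon>: "real J * \<epsilon> = 4 - 2 * \<epsilon>"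
  proof -
    have "real J = 2 ^ (N + 2) - 2" unfolding J_def by (simp add: of_nat_diff self_le_power)
    moreover have "(2::real) ^ (N + 2) * \<epsilon> = 4"
      unfolding \<epsilon>_def by (simp add: power_add power_mult_distrib[symmetric])
    ultimately show ?thesis by (simp add: left_diff_distrib)
  qed
  define E :: "nat \<Rightarrow> real" where "E j = real j * \<epsilon> / 2" for j
  have E_le: "E j \<le> 2 - \<epsilon>" if "j \<le> J" for j
    using mult_right_mono[of "real j" "real J" \<epsilon>] that \<epsilon> J\<epsilon> unfolding E_def by simp
  have E_nonneg: "0 \<le> E j" for j unfolding E_def using \<epsilon> by simp
  have levels: "admissible_levels J E" unfolding admissible_levels_def using E_le E_nonneg \<epsilon> by force
  define ep where "ep = \<epsilon> / 16"
  have ep: "0 < ep" "ep \<le> \<epsilon>" unfolding ep_def using \<epsilon> by auto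
  define \<rho> where "\<rho> = 2 / (2 + \<epsilon>)"
  have \<rho>: "0 < \<rho>" "\<rho> < 1" unfolding \<rho>_def using \<epsilon> by auto
  obtain k\<^sub>1 where k\<^sub>1: "(1/2::real) ^ k\<^sub>1 < 1 / (2 * real (J + 1) * (4 / ep))"
    using real_arch_pow_inv[of "1 / (2 * real (J + 1) * (4 / ep))" "1/2"] ep by auto
  obtain k\<^sub>2 where k\<^sub>2: "\<rho> ^ k\<^sub>2 < \<epsilon> / 48"
    using real_arch_pow_inv[of "\<epsilon> / 48" \<rho>] \<rho> \<epsilon> by auto
  define l where "l = k\<^sub>1 + k\<^sub>2 + 3"
  have l: "l \<ge> 1" unfolding l_def by simp
  have l_large: "real (J + 1) * (4 / ep) * (1/2)^l \<le> 1/2"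
  proof -
    define X where "X = real (J + 1) * (4 / ep)"
    have X: "X > 0" unfolding X_def using ep by simp
    have "(1/2::real) ^ l \<le> (1/2) ^ k\<^sub>1" unfolding l_def by (intro power_decreasing) auto
    moreover have "(1/2::real) ^ k\<^sub>1 < 1 / (2 * X)" using k\<^sub>1 unfolding X_def by (simp only: mult.assoc)
    ultimately have "(1/2::real) ^ l \<le> 1 / (2 * X)" by linarith
    hence "X * (1/2) ^ l \<le> X * (1 / (2 * X))" by (rule mult_left_mono) (use X in simp)
    also have "X * (1 / (2 * X)) = 1/2" using X by simp
    finally show ?thesis unfolding X_def .
  qed
  define W where "W = wells l J E"
  have W_bounded: "bounded (range W)"
    unfolding W_def bounded_iff using abs_wells_le[OF levels] by (auto simp: real_norm_def)
  have W_levels: "\<exists>w\<in>Sp W. \<bar>w - E j\<bar> \<le> \<epsilon> / 4" if j: "j \<le> J" for j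
  proof -
    obtain w where w: "w \<in> Sp W" "\<bar>w - E j\<bar> \<le> 12 * \<bar>well_decay (4 - E j)\<bar> ^ (k\<^sub>1 + k\<^sub>2)"
      using Sp_near_well_level[OF levels _ _ j, of "k\<^sub>1 + k\<^sub>2 + 1" l] unfolding W_def l_def by auto
    have "\<bar>well_decay (4 - E j)\<bar> \<le> 2 / (4 - E j)" using E_le[OF j] \<epsilon> by (intro abs_well_decay_le) simp
    also have "\<dots> \<le> \<rho>" unfolding \<rho>_def using E_le[OF j] \<epsilon> by (intro divide_left_mono) auto
    finally have "\<bar>well_decay (4 - E j)\<bar> ^ (k\<^sub>1 + k\<^sub>2) \<le> \<rho> ^ (k\<^sub>1 + k\<^sub>2)" by (intro power_mono) auto
    also have "\<dots> \<le> \<rho> ^ k\<^sub>2" using \<rho> by (intro power_decreasing) auto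
    finally show ?thesis using w k\<^sub>2 by (intro bexI[OF _ w(1)]) simp
  qed
  have Sp_W: "Sp W \<subseteq> {3/2..6} \<union> (\<Union>j\<le>J. {E j - ep..E j + ep})"
    unfolding W_def by (rule Sp_wells_subset[OF levels l ep(1) l_large])
  have "dH (Sp step_potential) (Sp W) \<le> ennreal \<epsilon>"
  proof (rule dH_le)
    fix x assume "x \<in> Sp step_potential"
    thus "\<exists>y\<in>Sp W. dist x y \<le> \<epsilon>"
      unfolding W_def Sp_step_potential using W_levels[unfolded W_def] \<epsilon>(1) J\<epsilon>
      by (intro dense_Sp_wells[OF levels, of \<epsilon>]) (simp_all add: E_def)
  next
    fix y assume "y \<in> Sp W"
    hence "y \<in> {3/2..6} \<union> (\<Union>j\<le>J. {E j - ep..E j + ep})" using Sp_W by (rule rev_subsetD)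
    hence "y \<in> {3/2..6} \<or> (\<exists>j\<le>J. E j - ep \<le> y \<and> y \<le> E j + ep)" by auto
    hence "- ep \<le> y \<and> y \<le> 6"
    proof
      assume "\<exists>j\<le>J. E j - ep \<le> y \<and> y \<le> E j + ep"
      then obtain j where "j \<le> J" "E j - ep \<le> y" "y \<le> E j + ep" by blast
      thus ?thesis using E_nonneg[of j] E_le[of j] ep \<epsilon> by linarith
    qed (use ep in auto)
    hence "\<exists>x\<in>{0..6}. dist x y \<le> \<epsilon>"
    proof (cases "0 \<le> y")
      case True thus ?thesis using \<epsilon> \<open>- ep \<le> y \<and> y \<le> 6\<close> by (intro bexI[of _ y]) auto
    next
      case False thus ?thesis using ep \<open>- ep \<le> y \<and> y \<le> 6\<close> by (intro bexI[of _ 0]) (auto simp: dist_real_def)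
    qed
    thus "\<exists>x\<in>Sp step_potential. dist x y \<le> \<epsilon>" unfolding Sp_step_potential .
  qed
  moreover have "measure lebesgue (Sp W) \<le> 5"
  proof -
    have "real (J + 1) * (2 * ep) = (real J * \<epsilon> + \<epsilon>) / 8" unfolding ep_def by (simp add: algebra_simps)
    also have "\<dots> \<le> 1/2" using J\<epsilon> \<epsilon> by simp
    finally show ?thesis using measure_Sp_wells_le[OF levels l ep(1) l_large] unfolding W_def by simp
  qed
  ultimately show ?thesis using W_bounded unfolding \<epsilon>_def by blast
qed

lemma dH_self: "dH X X = 0"
  using dH_le[of X X 0] by simp

lemma INF_dist_eq_0_imp_closure:
  assumes "(INF y\<in>Y. ennreal (dist x y)) = 0"
  shows "x \<in> closure Y"
  unfolding closure_approachable
proof (intro allI impI)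
  fix e :: real assume e: "e > 0"
  show "\<exists>y\<in>Y. dist y x < e"
  proof (rule ccontr)
    assume "\<not> ?thesis"
    hence "ennreal e \<le> (INF y\<in>Y. ennreal (dist x y))"
      by (auto intro!: INF_greatest ennreal_leI simp: dist_commute)
    thus False using assms e by simp
  qed
qed

lemma closed_eq_if_dH_eq_0:
  assumes "closed X" "closed Y" "dH X Y = 0"
  shows "X = Y"
proof -
  have "x \<in> Y" if "x \<in> X" for x
  proof -
    have "(INF y\<in>Y. ennreal (dist x y)) \<le> dH X Y"
      unfolding dH_def using that by (intro max.coboundedI1 SUP_upper)
    hence "(INF y\<in>Y. ennreal (dist x y)) = 0" using assms(3) by simp
    thus ?thesis using INF_dist_eq_0_imp_closure closure_closed[OF assms(2)] by blast
  qed
  moreover have "y \<in> X" if "y \<in> Y" for y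
  proof -
    have "(INF x\<in>X. ennreal (dist x y)) \<le> dH X Y"
      unfolding dH_def using that by (intro max.coboundedI2 SUP_upper)
    hence "(INF x\<in>X. ennreal (dist y x)) = 0" using assms(3) by (simp add: dist_commute)
    thus ?thesis using INF_dist_eq_0_imp_closure closure_closed[OF assms(1)] by blast
  qed
  ultimately show ?thesis by blast
qed

lemma dH_eq_0_if_le_powers:
  assumes "\<And>k. k \<ge> N \<Longrightarrow> dH X Y \<le> ennreal ((1/2) ^ Suc k)"
  shows "dH X Y = 0"
proof -
  have "(\<lambda>k. ennreal ((1/2) ^ Suc k)) \<longlonglongrightarrow> ennreal 0"
    by (intro tendsto_ennrealI LIMSEQ_Suc LIMSEQ_power_zero) simp
  hence "dH X Y \<le> ennreal 0" by (rule LIMSEQ_le_const) (use assms in auto)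
  thus ?thesis by simp
qed

lemma bounded_range_imp_abs_le:
  fixes V :: "int \<Rightarrow> real"
  assumes "bounded (range V)"
  obtains B where "\<And>n. \<bar>V n\<bar> \<le> B"
  using assms unfolding bounded_iff by (auto simp: real_norm_def)

text \<open>\<open>Xi_Lm\<close> picks some potential compatible with the input; all of them have the same
  (closed) spectrum.\<close>

lemma Xi_Lm_eventually_Sp:
  assumes "S \<in> Omega_S1" "bounded (range V)" "\<And>k. k \<ge> N \<Longrightarrow> S k = Sp V"
  shows "Xi_Lm S = measure lebesgue (Sp V)"
proof -
  let ?P = "\<lambda>V. bounded (range V) \<and> (\<forall>k. dH (S k) (Sp V) \<le> ennreal ((1/2) ^ Suc k))"
  have "\<exists>V. ?P V" using assms(1) unfolding Omega_S1_def by blast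
  hence "?P (SOME V. ?P V)" by (rule someI_ex)
  then obtain V' where V': "bounded (range V')" "\<And>k. dH (S k) (Sp V') \<le> ennreal ((1/2) ^ Suc k)"
    and Xi: "Xi_Lm S = measure lebesgue (Sp V')" unfolding Xi_Lm_def by blast
  have "dH (Sp V) (Sp V') = 0"
    by (rule dH_eq_0_if_le_powers[of N]) (metis V'(2) assms(3))
  moreover obtain B where "\<And>n. \<bar>V n\<bar> \<le> B" using bounded_range_imp_abs_le[OF assms(2)] by blast
  moreover obtain B' where "\<And>n. \<bar>V' n\<bar> \<le> B'" using bounded_range_imp_abs_le[OF V'(1)] by blast
  ultimately have "Sp V = Sp V'" by (intro closed_eq_if_dH_eq_0 closed_Sp)
  thus ?thesis using Xi by simp
qed

lemma general_algorithm_reads_prefix: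
  assumes "general_algorithm Omega_S1 Lambda_S1 \<Gamma>" "A \<in> Omega_S1"
  obtains N where "\<And>B. B \<in> Omega_S1 \<Longrightarrow> (\<And>k. k < N \<Longrightarrow> B k = A k) \<Longrightarrow> \<Gamma> B = \<Gamma> A"
proof -
  obtain L where "\<forall>A\<in>Omega_S1. finite (L A) \<and> L A \<subseteq> Lambda_S1 \<and>
      (\<forall>B\<in>Omega_S1. (\<forall>f\<in>L A. f B = f A) \<longrightarrow> L B = L A \<and> \<Gamma> B = \<Gamma> A)"
    using assms(1) unfolding general_algorithm_def by blast
  hence L: "finite (L A)" "L A \<subseteq> Lambda_S1"
    "\<And>B. B \<in> Omega_S1 \<Longrightarrow> \<forall>f\<in>L A. f B = f A \<Longrightarrow> \<Gamma> B = \<Gamma> A"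
    using assms(2) by blast+
  have "\<forall>f\<in>L A. \<exists>k. f = (\<lambda>S. S k)" using L(2) unfolding Lambda_S1_def by auto
  then obtain idx where idx: "\<forall>f\<in>L A. f = (\<lambda>S. S (idx f))" by metis
  show ?thesis
  proof (rule that[of "Suc (Max (idx ` L A))"])
    fix B assume B: "B \<in> Omega_S1" and prefix: "\<And>k. k < Suc (Max (idx ` L A)) \<Longrightarrow> B k = A k"
    have "f B = f A" if f: "f \<in> L A" for f
    proof -
      have "idx f \<le> Max (idx ` L A)" using L(1) f by (intro Max_ge) auto
      hence "B (idx f) = A (idx f)" using prefix by simp
      thus ?thesis using idx f by metis
    qed
    thus "\<Gamma> B = \<Gamma> A" using L(3)[OF B] by blast
  qed
qed

theorem mainTheorem4:
  shows "\<not> Delta1G Xi_Lm Omega_S1 {0..} dist Lambda_S1"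
proof
  assume "Delta1G Xi_Lm Omega_S1 {0..} dist Lambda_S1"
  then obtain \<Gamma>\<^sub>n where \<Gamma>\<^sub>n: "\<forall>n. general_algorithm Omega_S1 Lambda_S1 (\<Gamma>\<^sub>n n) \<and>
      (\<forall>A\<in>Omega_S1. \<Gamma>\<^sub>n n A \<in> {0..} \<and> dist (\<Gamma>\<^sub>n n A) (Xi_Lm A) \<le> (1/2) ^ n)"
    unfolding Delta1G_def by blast
  hence alg: "general_algorithm Omega_S1 Lambda_S1 (\<Gamma>\<^sub>n 2)" by blast
  have acc: "dist (\<Gamma>\<^sub>n 2 A) (Xi_Lm A) \<le> 1/4" if "A \<in> Omega_S1" for A
  proof -
    have "dist (\<Gamma>\<^sub>n 2 A) (Xi_Lm A) \<le> (1/2) ^ 2" using \<Gamma>\<^sub>n that by blast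
    thus ?thesis by (simp add: power2_eq_square)
  qed
  define \<Gamma> where "\<Gamma> = \<Gamma>\<^sub>n 2"
  define A where "A = (\<lambda>k::nat. Sp step_potential)"
  have step_bounded: "bounded (range step_potential)"
    unfolding bounded_iff using abs_step_potential_le by (auto simp: real_norm_def)
  have A: "A \<in> Omega_S1" unfolding Omega_S1_def A_def using step_bounded dH_self by auto
  obtain N where N: "\<And>B. B \<in> Omega_S1 \<Longrightarrow> (\<And>k. k < N \<Longrightarrow> B k = A k) \<Longrightarrow> \<Gamma> B = \<Gamma> A"
    using general_algorithm_reads_prefix[OF alg[folded \<Gamma>_def] A] by blast
  obtain W where W: "bounded (range W)" "dH (Sp step_potential) (Sp W) \<le> ennreal ((1/2) ^ Suc N)"
    "measure lebesgue (Sp W) \<le> 5"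
    using exists_potential_near_step_small_Sp[of "Suc N"] by auto
  define B where "B = (\<lambda>k. if k \<le> N then Sp step_potential else Sp W)"
  have "dH (B k) (Sp W) \<le> ennreal ((1/2) ^ Suc k)" for k
    using order_trans[OF W(2) ennreal_leI[OF power_decreasing[of "Suc k" "Suc N" "1/2::real"]]]
    by (cases "k \<le> N") (auto simp: B_def dH_self)
  hence B: "B \<in> Omega_S1" unfolding Omega_S1_def using W(1) by blast
  have "\<Gamma> B = \<Gamma> A" using N[OF B] unfolding A_def B_def by simp
  moreover have "Xi_Lm A = 6"
    using Xi_Lm_eventually_Sp[OF A step_bounded, of 0] by (simp add: A_def Sp_step_potential)
  moreover have "Xi_Lm B \<le> 5"
    using Xi_Lm_eventually_Sp[OF B W(1), of "Suc N"] W(3) by (simp add: B_def)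
  ultimately show False using acc[OF A] acc[OF B] unfolding \<Gamma>_def dist_real_def by linarith
qed

end
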